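(* Let $I$ be a compact interval, $\tau>0$, and $G\le\mathrm{Diff}_+^{1,\tau}(I)$. If $c$ belongs to the center of $G$, then the restriction of the action of $G$ to $\operatorname{supp} c$ is Conradian.
   Context: $\mathrm{Diff}_+^{1,\tau}(I)$ is the group of orientation-preserving $C^1$-diffeomorphisms of $I$ with $\tau$-Hölder continuous derivative. $\operatorname{supp} c=I\setminus\mathrm{Fix}(c)$, which is $G$-invariant. For a group acting by order-preserving bijections on an ordered set $\Omega$ (here $\Omega=\operatorname{supp} c$ with the order of $I$), $f,g$ are crossed if there exist $u<w<v$ in $\Omega$ with $g^n(u)<w<f^n(v)$ for all $n\in\mathbb{Z}$ and $g^N(v)<w<f^N(u)$ for some $N\in\mathbb{Z}$; the action is Conradian if no two elements are crossed. *)

theory Defs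
  imports "HOL-Analysis.Analysis"
begin

text \<open>Positivity of the
  derivative together with bijectivity of I encodes "orientation-preserving diffeomorphism".\<close>
definition Diff_1_tau :: "real set \<Rightarrow> real \<Rightarrow> (real \<Rightarrow> real) set" where
  "Diff_1_tau I \<tau> = {f. bij_betw f I I \<and>
     (\<exists>f'. (\<forall>x\<in>I. (f has_real_derivative f' x) (at x within I) \<and> f' x > 0) \<and>
           (\<exists>C. \<forall>x\<in>I. \<forall>y\<in>I. \<bar>f' x - f' y\<bar> \<le> C * \<bar>x - y\<bar> powr \<tau>))}"

text \<open>G is a subgroup of Diff(I); group elements are identified by their values on I.\<close>
definition diff_subgroup :: "real set \<Rightarrow> real \<Rightarrow> (real \<Rightarrow> real) set \<Rightarrow> bool" where
  "diff_subgroup I \<tau> G \<longleftrightarrow> G \<subseteq> Diff_1_tau I \<tau> \<and>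
     (\<exists>e\<in>G. \<forall>x\<in>I. e x = x) \<and>
     (\<forall>f\<in>G. \<forall>g\<in>G. \<exists>h\<in>G. \<forall>x\<in>I. h x = f (g x)) \<and>
     (\<forall>f\<in>G. \<exists>h\<in>G. \<forall>x\<in>I. h x = inv_into I f x)"

definition in_center :: "real set \<Rightarrow> (real \<Rightarrow> real) set \<Rightarrow> (real \<Rightarrow> real) \<Rightarrow> bool" where
  "in_center I G c \<longleftrightarrow> c \<in> G \<and> (\<forall>g\<in>G. \<forall>x\<in>I. c (g x) = g (c x))"

definition supp :: "real set \<Rightarrow> (real \<Rightarrow> real) \<Rightarrow> real set" where
  "supp I c = {x\<in>I. c x \<noteq> x}"

definition ipow :: "real set \<Rightarrow> (real \<Rightarrow> real) \<Rightarrow> int \<Rightarrow> real \<Rightarrow> real" where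
  "ipow I f n = (if n \<ge> 0 then f ^^ nat n else (inv_into I f) ^^ nat (- n))"

definition crossed :: "real set \<Rightarrow> real set \<Rightarrow> (real \<Rightarrow> real) \<Rightarrow> (real \<Rightarrow> real) \<Rightarrow> bool" where
  "crossed I \<Omega> f g \<longleftrightarrow> (\<exists>u\<in>\<Omega>. \<exists>w\<in>\<Omega>. \<exists>v\<in>\<Omega>. u < w \<and> w < v \<and>
     (\<forall>n::int. ipow I g n u < w \<and> w < ipow I f n v) \<and>
     (\<exists>N::int. ipow I g N v < w \<and> w < ipow I f N u))"

definition conradian_on :: "real set \<Rightarrow> (real \<Rightarrow> real) set \<Rightarrow> real set \<Rightarrow> bool" where
  "conradian_on I G \<Omega> \<longleftrightarrow> (\<forall>f\<in>G. \<forall>g\<in>G. \<not> crossed I \<Omega> f g)"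

end

theory Submission
  imports Defs
begin

text \<open>Suppose \<open>f\<close> and \<open>g\<close> are crossed at \<open>u < w < v\<close> in \<open>supp c\<close>. Let \<open>P\<close> be the last fixed point
  of \<open>g\<close> left of \<open>w\<close> and \<open>Q\<close> the first fixed point of \<open>f\<close> right of \<open>w\<close>. Powers of \<open>g\<^sup>\<plusminus>\<^sup>1\<close> and
  \<open>f\<^sup>\<plusminus>\<^sup>1\<close> squeeze \<open>[P, Q]\<close> towards \<open>P\<close> and towards \<open>Q\<close> respectively, so they play ping-pong on
  \<open>[P, Q]\<close>; since derivatives are Hoelder continuous, some word \<open>W\<close> in them satisfies
  \<open>W' \<le> 1/2\<close> on \<open>[P, Q]\<close>. Let \<open>(\<alpha>, \<beta>)\<close> be the component of \<open>supp c\<close> containing \<open>w\<close>. As \<open>c\<close> is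
  central, an element fixing a point of \<open>(\<alpha>, \<beta>)\<close> fixes \<open>\<alpha>\<close> and \<open>\<beta>\<close>; hence either
  \<open>[P, Q] \<subseteq> (\<alpha>, \<beta>)\<close> or \<open>[\<alpha>, \<beta>] \<subseteq> [P, Q]\<close>. In the first case \<open>W\<close> has a fixed point in \<open>(\<alpha>, \<beta>)\<close>
  where it contracts, which Kopell's lemma forbids for a map commuting with \<open>c\<close>. In the second,
  the iterates of \<open>W\<close> shrink \<open>[\<alpha>, \<beta>]\<close> to tiny intervals with ends fixed by \<open>c\<close>, on which \<open>c\<close> is
  \<open>C\<^sup>1\<close>-close to the identity; with bounded distortion of the iterates this forces \<open>c\<close> to fix
  \<open>w\<close>.\<close>

section \<open>Calculus on compact intervals\<close>

lemma has_real_derivative_unique_Icc: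
  fixes f :: "real \<Rightarrow> real"
  assumes "a < b" "x \<in> {a..b}" "(f has_real_derivative d1) (at x within {a..b})"
    "(f has_real_derivative d2) (at x within {a..b})"
  shows "d1 = d2"
proof -
  have "(*) d1 = (*) d2"
    using frechet_derivative_unique_within_closed_interval[of a b x f "(*) d1" "(*) d2"] assms
    by (auto simp: has_field_derivative_def)
  then show ?thesis by (metis mult.right_neutral)
qed

lemma mvt_within:
  fixes f f' :: "real \<Rightarrow> real"
  assumes d: "\<forall>x\<in>S. (f has_real_derivative f' x) (at x within S)" and sub: "{x..y} \<subseteq> S"
    and xy: "x \<le> y"
  shows "\<exists>\<xi>\<in>{x..y}. f y - f x = f' \<xi> * (y - x)"
proof -
  have "\<exists>\<xi>\<in>{x..y}. f y - f x = (\<lambda>h. f' \<xi> * h) (y - x)"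
  proof (rule mvt_very_simple[OF xy])
    fix z assume "x \<le> z" "z \<le> y"
    then show "(f has_derivative (\<lambda>h. f' z * h)) (at z within {x..y})"
      using DERIV_subset[OF d[rule_format] sub] sub by (auto simp: has_field_derivative_def)
  qed
  then show ?thesis by simp
qed

lemma mvt_within_between:
  fixes f f' :: "real \<Rightarrow> real"
  assumes d: "\<forall>x\<in>S. (f has_real_derivative f' x) (at x within S)"
    and sub: "{min x y..max x y} \<subseteq> S"
  shows "\<exists>\<xi>\<in>{min x y..max x y}. f y - f x = f' \<xi> * (y - x)"
proof (cases "x \<le> y")
  case True
  then show ?thesis using mvt_within[OF d, of x y] sub by auto
next
  case False
  then obtain \<xi> where "\<xi> \<in> {y..x}" "f x - f y = f' \<xi> * (x - y)"
    using mvt_within[OF d, of y x] sub by auto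
  then show ?thesis using False by (intro bexI[of _ \<xi>]) (auto simp: algebra_simps)
qed

lemma has_real_derivative_pos_imp_strict_mono_on:
  fixes f f' :: "real \<Rightarrow> real"
  assumes d: "\<forall>x\<in>{a..b}. (f has_real_derivative f' x) (at x within {a..b})"
    and pos: "\<forall>x\<in>{a..b}. f' x > 0"
  shows "strict_mono_on {a..b} f"
proof (rule strict_mono_onI)
  fix x y assume xy: "x \<in> {a..b}" "y \<in> {a..b}" "x < y"
  then obtain \<xi> where "\<xi> \<in> {x..y}" "f y - f x = f' \<xi> * (y - x)"
    using mvt_within[OF d, of x y] by auto
  moreover have "f' \<xi> > 0" using pos calculation xy by auto
  ultimately show "f x < f y" using xy by (smt (verit) mult_pos_pos)
qed

lemma funpow_maps_into:
  assumes "\<forall>x\<in>I. f x \<in> I" "x \<in> I"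
  shows "(f ^^ n) x \<in> I"
  using assms by (induction n) auto

lemma funpow_fixed_point: "f x = x \<Longrightarrow> (f ^^ n) x = x"
  by (induction n) auto

lemma funpow_cong_on:
  assumes "\<forall>x\<in>I. f x = g x" "\<forall>x\<in>I. g x \<in> I" "x \<in> I"
  shows "(f ^^ n) x = (g ^^ n) x"
  using assms funpow_maps_into[OF assms(2,3)] by (induction n) auto

lemma strict_mono_on_funpow:
  assumes "\<forall>x\<in>I. f x \<in> I" "strict_mono_on I f"
  shows "strict_mono_on I (f ^^ n)"
proof (induction n)
  case (Suc n)
  show ?case
  proof (rule strict_mono_onI)
    fix x y assume "x \<in> I" "y \<in> I" "x < y"
    then show "(f ^^ Suc n) x < (f ^^ Suc n) y"
      using Suc funpow_maps_into[OF assms(1)] assms(2) by (simp add: strict_mono_on_def)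
  qed
qed (simp add: strict_mono_on_def)

lemma funpow_commute_on:
  assumes "\<forall>x\<in>I. f x \<in> I" "\<forall>x\<in>I. f (g x) = g (f x)" "x \<in> I"
  shows "(f ^^ n) (g x) = g ((f ^^ n) x)"
  using assms funpow_maps_into[OF assms(1,3)] by (induction n) auto

lemma funpow_has_real_derivative:
  fixes f :: "real \<Rightarrow> real"
  assumes fi: "\<forall>x\<in>I. f x \<in> I" and fd: "\<forall>x\<in>I. (f has_real_derivative f' x) (at x within I)"
    and x: "x \<in> I"
  shows "((f ^^ n) has_real_derivative (\<Prod>j<n. f' ((f ^^ j) x))) (at x within I)"
proof (induction n)
  case 0
  then show ?case by simp
next
  case (Suc n)
  have "(f ^^ n) ` I \<subseteq> I" using funpow_maps_into[OF fi] by auto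
  then have "(f \<circ> (f ^^ n) has_real_derivative f' ((f ^^ n) x) * (\<Prod>j<n. f' ((f ^^ j) x)))
      (at x within I)"
    using DERIV_image_chain[OF DERIV_subset[OF fd[rule_format] ] Suc] funpow_maps_into[OF fi x]
    by blast
  then show ?case by (simp add: mult.commute o_def)
qed

lemma powr_power_base:
  fixes \<theta> t :: real
  assumes "\<theta> > 0"
  shows "(\<theta> ^ j) powr t = (\<theta> powr t) ^ j"
  using assms by (induction j) (auto simp: powr_mult)

lemma powr_le_linear_plus_const:
  fixes x \<delta> t :: real
  assumes "x \<ge> 0" "\<delta> > 0" "0 < t" "t \<le> 1"
  shows "x powr t \<le> \<delta> powr t * (x / \<delta>) + \<delta> powr t"
proof (cases "x \<le> \<delta>")
  case True
  then have "x powr t \<le> \<delta> powr t" using assms by (intro powr_mono2) auto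
  moreover have "\<delta> powr t * (x / \<delta>) \<ge> 0" using assms by simp
  ultimately show ?thesis by linarith
next
  case False
  have "x = \<delta> * (x / \<delta>)" using assms by simp
  then have "x powr t = \<delta> powr t * (x / \<delta>) powr t"
    using assms by (metis powr_mult less_imp_le divide_nonneg_pos)
  also have "(x / \<delta>) powr t \<le> (x / \<delta>) powr 1" using False assms by (intro powr_mono) auto
  also have "\<dots> = x / \<delta>" using False assms by simp
  finally have "x powr t \<le> \<delta> powr t * (x / \<delta>)" using assms by (simp add: mult_left_mono)
  moreover have "\<delta> powr t \<ge> 0" by simp
  ultimately show ?thesis by linarith
qed

lemma hoelder_imp_continuous_on:
  fixes h' :: "real \<Rightarrow> real"
  assumes tau: "\<tau> > 0" and H: "\<forall>x\<in>I. \<forall>y\<in>I. \<bar>h' x - h' y\<bar> \<le> C * \<bar>x - y\<bar> powr \<tau>"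
  shows "continuous_on I h'"
proof (unfold continuous_on_iff, intro ballI allI impI)
  fix x e :: real assume x: "x \<in> I" and e: "0 < e"
  define C' where "C' = max C 1"
  have C': "C' > 0" "C \<le> C'" by (auto simp: C'_def)
  define d where "d = (e / C') powr (1 / \<tau>)"
  have d: "d > 0" using e C' by (simp add: d_def)
  have dp: "d powr \<tau> = e / C'" using e C' tau by (simp add: d_def powr_powr)
  show "\<exists>d>0. \<forall>x'\<in>I. dist x' x < d \<longrightarrow> dist (h' x') (h' x) < e"
  proof (intro exI conjI ballI impI)
    show "d > 0" by (rule d)
    fix x' assume x': "x' \<in> I" "dist x' x < d"
    have "\<bar>h' x' - h' x\<bar> \<le> C * \<bar>x' - x\<bar> powr \<tau>" using H x x' by blast
    also have "\<dots> \<le> C' * \<bar>x' - x\<bar> powr \<tau>" using C' by (intro mult_right_mono) auto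
    also have "\<dots> < C' * d powr \<tau>"
      using x' tau C' by (intro mult_strict_left_mono powr_less_mono2) (auto simp: dist_real_def)
    also have "\<dots> = e" using dp C' by simp
    finally show "dist (h' x') (h' x) < e" by (simp add: dist_real_def)
  qed
qed

lemma hoelder_smaller_exponent:
  fixes h :: "real \<Rightarrow> real"
  assumes H: "\<forall>x\<in>{a..b}. \<forall>y\<in>{a..b}. \<bar>h x - h y\<bar> \<le> C * \<bar>x - y\<bar> powr \<tau>"
    and t: "0 < t" "t \<le> \<tau>"
  obtains C' where "C' > 0" "\<forall>x\<in>{a..b}. \<forall>y\<in>{a..b}. \<bar>h x - h y\<bar> \<le> C' * \<bar>x - y\<bar> powr t"
proof
  define C' where "C' = max C 1 * (\<bar>b - a\<bar> + 1) powr (\<tau> - t)"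
  show "C' > 0" by (simp add: C'_def)
  show "\<forall>x\<in>{a..b}. \<forall>y\<in>{a..b}. \<bar>h x - h y\<bar> \<le> C' * \<bar>x - y\<bar> powr t"
  proof (intro ballI)
    fix x y assume xy: "x \<in> {a..b}" "y \<in> {a..b}"
    have "\<bar>h x - h y\<bar> \<le> C * \<bar>x - y\<bar> powr \<tau>" using H xy by blast
    also have "\<dots> \<le> max C 1 * \<bar>x - y\<bar> powr \<tau>" by (intro mult_right_mono) auto
    also have "\<bar>x - y\<bar> powr \<tau> = \<bar>x - y\<bar> powr (\<tau> - t) * \<bar>x - y\<bar> powr t"
      using t by (cases "x = y") (simp_all add: powr_add[symmetric])
    also have "\<bar>x - y\<bar> powr (\<tau> - t) \<le> (\<bar>b - a\<bar> + 1) powr (\<tau> - t)"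
      using xy t by (intro powr_mono2) auto
    finally show "\<bar>h x - h y\<bar> \<le> C' * \<bar>x - y\<bar> powr t"
      by (simp add: C'_def mult_right_mono mult_left_mono mult.assoc)
  qed
qed

text \<open>The multiplicative form of the Hoelder condition is what survives composition, since
  the derivative of a composite is a product.\<close>
lemma hoelder_imp_log_hoelder:
  fixes h :: "real \<Rightarrow> real"
  assumes H: "\<forall>x\<in>S. \<forall>y\<in>S. \<bar>h x - h y\<bar> \<le> C * \<bar>x - y\<bar> powr t" and C: "C \<ge> 0"
    and lower: "\<forall>x\<in>S. m \<le> h x" and m: "m > 0"
    and x: "x \<in> S" and y: "y \<in> S"
  shows "h x \<le> h y * exp (C / m * \<bar>x - y\<bar> powr t)"
proof -
  have "h x - h y \<le> C * \<bar>x - y\<bar> powr t" using H x y abs_le_D1 by blast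
  also have "\<dots> = m * (C / m * \<bar>x - y\<bar> powr t)" using m by simp
  also have "\<dots> \<le> h y * (C / m * \<bar>x - y\<bar> powr t)"
    using lower y C m by (intro mult_right_mono) auto
  finally have "h x \<le> h y * (1 + C / m * \<bar>x - y\<bar> powr t)" by (simp add: algebra_simps)
  also have "\<dots> \<le> h y * exp (C / m * \<bar>x - y\<bar> powr t)"
    using lower y m by (intro mult_left_mono exp_ge_add_one_self) auto
  finally show ?thesis .
qed

text \<open>The exponent is capped at 1 because the counting argument for ping-pong words needs
  concavity of \<open>x powr t\<close>.\<close>
lemma Diff_1_tau_log_hoelder:
  fixes h :: "real \<Rightarrow> real"
  assumes ab: "a < b" and tau: "\<tau> > 0" and h: "h \<in> Diff_1_tau {a..b} \<tau>"
  obtains h' L where "\<forall>x\<in>{a..b}. (h has_real_derivative h' x) (at x within {a..b})"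
    "\<forall>x\<in>{a..b}. h' x > 0" "continuous_on {a..b} h'" "L \<ge> 0"
    "\<forall>x\<in>{a..b}. \<forall>y\<in>{a..b}. h' x \<le> h' y * exp (L * \<bar>x - y\<bar> powr (min \<tau> 1))"
proof -
  obtain h' C where d: "\<forall>x\<in>{a..b}. (h has_real_derivative h' x) (at x within {a..b}) \<and> h' x > 0"
    and H: "\<forall>x\<in>{a..b}. \<forall>y\<in>{a..b}. \<bar>h' x - h' y\<bar> \<le> C * \<bar>x - y\<bar> powr \<tau>"
    using h unfolding Diff_1_tau_def by blast
  have cont: "continuous_on {a..b} h'" by (rule hoelder_imp_continuous_on[OF tau H])
  obtain x0 where x0: "x0 \<in> {a..b}" "\<forall>y\<in>{a..b}. h' x0 \<le> h' y"
    using continuous_attains_inf[OF compact_Icc _ cont] ab by auto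
  have "0 < min \<tau> 1" "min \<tau> 1 \<le> \<tau>" using tau by auto
  then obtain C' where C': "C' > 0"
    "\<forall>x\<in>{a..b}. \<forall>y\<in>{a..b}. \<bar>h' x - h' y\<bar> \<le> C' * \<bar>x - y\<bar> powr (min \<tau> 1)"
    by (rule hoelder_smaller_exponent[OF H])
  have "h' x0 > 0" using d x0 by blast
  then show ?thesis
    using that[of h' "C' / h' x0"] d cont C' hoelder_imp_log_hoelder[OF C'(2) _ x0(2)] by auto
qed

section \<open>Fixed points of interval maps\<close>

lemma greatest_fixed_point_above:
  fixes h :: "real \<Rightarrow> real"
  assumes cont: "continuous_on {l..r} h" and x: "x \<in> {l..r}" "h x = x"
  obtains P where "x \<le> P" "P \<le> r" "h P = P" "\<And>y. P < y \<Longrightarrow> y \<le> r \<Longrightarrow> h y \<noteq> y"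
proof -
  define F where "F = {y \<in> {x..r}. h y - y = 0}"
  have "closed F" unfolding F_def
    using x by (intro continuous_closed_preimage_constant continuous_intros
      continuous_on_subset[OF cont]) auto
  moreover have "bdd_above F" "x \<in> F" using x by (auto simp: F_def bdd_above_def)
  ultimately have "Sup F \<in> F" "\<And>y. y \<in> F \<Longrightarrow> y \<le> Sup F"
    using closed_contains_Sup cSup_upper by blast+
  then show ?thesis
  proof (intro that[of "Sup F"])
    fix y assume y: "Sup F < y" "y \<le> r"
    show "h y \<noteq> y"
    proof
      assume "h y = y"
      then have "y \<in> F" using y \<open>Sup F \<in> F\<close> by (auto simp: F_def)
      then show False using y \<open>\<And>y. y \<in> F \<Longrightarrow> y \<le> Sup F\<close> by fastforce
    qed
  qed (auto simp: F_def)
qed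

lemma least_fixed_point_below:
  fixes h :: "real \<Rightarrow> real"
  assumes cont: "continuous_on {l..r} h" and x: "x \<in> {l..r}" "h x = x"
  obtains P where "l \<le> P" "P \<le> x" "h P = P" "\<And>y. l \<le> y \<Longrightarrow> y < P \<Longrightarrow> h y \<noteq> y"
proof -
  define F where "F = {y \<in> {l..x}. h y - y = 0}"
  have "closed F" unfolding F_def
    using x by (intro continuous_closed_preimage_constant continuous_intros
      continuous_on_subset[OF cont]) auto
  moreover have "bdd_below F" "x \<in> F" using x by (auto simp: F_def bdd_below_def)
  ultimately have "Inf F \<in> F" "\<And>y. y \<in> F \<Longrightarrow> Inf F \<le> y"
    using closed_contains_Inf cInf_lower by blast+
  then show ?thesis
  proof (intro that[of "Inf F"])
    fix y assume y: "l \<le> y" "y < Inf F"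
    show "h y \<noteq> y"
    proof
      assume "h y = y"
      then have "y \<in> F" using y \<open>Inf F \<in> F\<close> by (auto simp: F_def)
      then show False using y \<open>\<And>y. y \<in> F \<Longrightarrow> Inf F \<le> y\<close> by fastforce
    qed
  qed (auto simp: F_def)
qed

lemma fixed_point_free_component:
  fixes c :: "real \<Rightarrow> real"
  assumes cont: "continuous_on {a..b} c" and "c a = a" "c b = b"
    and w: "w \<in> {a..b}" "c w \<noteq> w"
  obtains \<alpha> \<beta> where "a \<le> \<alpha>" "\<alpha> < w" "w < \<beta>" "\<beta> \<le> b" "c \<alpha> = \<alpha>" "c \<beta> = \<beta>"
    "\<And>x. \<alpha> < x \<Longrightarrow> x < \<beta> \<Longrightarrow> c x \<noteq> x"
proof -
  have "continuous_on {a..w} c" "continuous_on {w..b} c"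
    using cont w by (auto intro: continuous_on_subset)
  then obtain \<alpha> \<beta> where \<alpha>: "a \<le> \<alpha>" "\<alpha> \<le> w" "c \<alpha> = \<alpha>" "\<And>y. \<alpha> < y \<Longrightarrow> y \<le> w \<Longrightarrow> c y \<noteq> y"
    and \<beta>: "w \<le> \<beta>" "\<beta> \<le> b" "c \<beta> = \<beta>" "\<And>y. w \<le> y \<Longrightarrow> y < \<beta> \<Longrightarrow> c y \<noteq> y"
    using greatest_fixed_point_above[of a w c a] least_fixed_point_below[of w b c b] assms
    by (metis atLeastAtMost_iff order_refl)
  show ?thesis
  proof (rule that[OF \<alpha>(1) _ _ \<beta>(2) \<alpha>(3) \<beta>(3)])
    show "\<alpha> < w" "w < \<beta>" using \<alpha> \<beta> w by (auto simp: le_less)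
    show "c x \<noteq> x" if "\<alpha> < x" "x < \<beta>" for x
      using \<alpha>(4) \<beta>(4) that by (cases "x \<le> w") auto
  qed
qed

lemma fixed_point_free_sign:
  fixes \<sigma> :: "real \<Rightarrow> real"
  assumes cont: "continuous_on S \<sigma>" and S: "connected S" and free: "\<forall>x\<in>S. \<sigma> x \<noteq> x"
    and xy: "x \<in> S" "y \<in> S" and below: "\<sigma> x < x"
  shows "\<sigma> y < y"
proof (rule ccontr)
  assume "\<not> \<sigma> y < y"
  have sub: "{min x y..max x y} \<subseteq> S"
    using connected_contains_Icc[OF S] xy by (simp add: min_def max_def)
  then have "continuous_on {min x y..max x y} (\<lambda>z. \<sigma> z - z)"
    by (intro continuous_intros continuous_on_subset[OF cont])
  then obtain z where "z \<in> {min x y..max x y}" "\<sigma> z - z = 0"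
    using IVT'[of "\<lambda>z. \<sigma> z - z" x 0 y] IVT2'[of "\<lambda>z. \<sigma> z - z" x 0 y] below \<open>\<not> \<sigma> y < y\<close>
    by (cases "x \<le> y") (auto simp: min_def max_def)
  then show False using free sub by auto
qed

lemma Sup_Inf_invariant_set_fixed:
  fixes \<sigma> :: "real \<Rightarrow> real"
  assumes cont: "continuous_on {a..b} \<sigma>" and mono: "mono_on {a..b} \<sigma>"
    and S: "S \<subseteq> {a..b}" "S \<noteq> {}" "\<sigma> ` S = S"
  shows "\<sigma> (Sup S) = Sup S" "\<sigma> (Inf S) = Inf S"
proof -
  define clamp where "clamp x = max a (min b x)" for x
  have clamp: "clamp ` UNIV \<subseteq> {a..b}" "\<And>x. x \<in> {a..b} \<Longrightarrow> clamp x = x"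
    using S by (auto simp: clamp_def)
  have "continuous_on UNIV (\<sigma> \<circ> clamp)"
    by (rule continuous_on_compose[OF _ continuous_on_subset[OF cont clamp(1)]])
      (auto simp: clamp_def intro!: continuous_intros)
  then have cont': "continuous (at x within S) (\<sigma> \<circ> clamp)" for x S
    using continuous_at_imp_continuous_at_within continuous_on_eq_continuous_at open_UNIV by blast
  have "mono (\<sigma> \<circ> clamp)"
  proof (rule monoI)
    fix x y :: real assume "x \<le> y"
    then have "clamp x \<le> clamp y" by (auto simp: clamp_def)
    moreover have "clamp x \<in> {a..b}" "clamp y \<in> {a..b}" using clamp(1) by blast+
    ultimately show "(\<sigma> \<circ> clamp) x \<le> (\<sigma> \<circ> clamp) y" using mono_onD[OF mono] by simp
  qed
  have "(\<sigma> \<circ> clamp) ` S = \<sigma> ` S" using S(1) clamp(2) by (intro image_cong) auto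
  then have img: "(\<sigma> \<circ> clamp) ` S = S" using S(3) by simp
  have bdd: "bdd_above S" "bdd_below S"
    using bdd_above_mono[OF bdd_above_Icc S(1)] bdd_below_mono[OF bdd_below_Icc S(1)] .
  obtain x where "x \<in> S" using S(2) by blast
  then have "Sup S \<in> {a..b}" "Inf S \<in> {a..b}"
    using S(1,2) cSup_upper[OF _ bdd(1)] cSup_least[OF S(2)]
      cInf_lower[OF _ bdd(2)] cInf_greatest[OF S(2)]
    by (meson atLeastAtMost_iff order_trans subsetD)+
  then show "\<sigma> (Sup S) = Sup S" "\<sigma> (Inf S) = Inf S"
    using continuous_at_Sup_mono[OF \<open>mono (\<sigma> \<circ> clamp)\<close> cont' S(2) bdd(1)]
      continuous_at_Inf_mono[OF \<open>mono (\<sigma> \<circ> clamp)\<close> cont' S(2) bdd(2)] img clamp(2)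
    by simp_all
qed

lemma funpow_tendsto_fixed_point_left:
  fixes \<sigma> :: "real \<Rightarrow> real"
  assumes cont: "continuous_on {P..Q} \<sigma>" and mono: "mono_on {P..Q} \<sigma>" and PQ: "P \<le> Q"
    and fixed: "\<sigma> P = P" and below: "\<And>x. P < x \<Longrightarrow> x \<le> Q \<Longrightarrow> \<sigma> x < x"
  shows "(\<lambda>n. (\<sigma>^^n) Q) \<longlonglongrightarrow> P"
proof -
  define s where "s n = (\<sigma>^^n) Q" for n
  have s: "P \<le> s n \<and> s n \<le> Q" for n
  proof (induction n)
    case (Suc n)
    then have "P \<le> \<sigma> (s n)" using mono_onD[OF mono, of P "s n"] fixed PQ by auto
    moreover have "\<sigma> (s n) \<le> s n" using below[of "s n"] Suc fixed by (cases "s n = P") auto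
    ultimately show ?case using Suc by (simp add: s_def)
  qed (simp add: s_def PQ)
  have "decseq s"
    using below s fixed by (intro decseq_SucI) (metis funpow.simps(2) o_apply order_le_less s_def)
  then obtain l where l: "s \<longlonglongrightarrow> l" using decseq_convergent[of s P] s by blast
  have lPQ: "l \<in> {P..Q}" using LIMSEQ_le_const[OF l] LIMSEQ_le_const2[OF l] s by auto
  have "(\<lambda>n. \<sigma> (s n)) \<longlonglongrightarrow> \<sigma> l"
    by (rule continuous_on_tendsto_compose[OF cont l lPQ]) (use s in auto)
  moreover have "(\<lambda>n. \<sigma> (s n)) \<longlonglongrightarrow> l" using LIMSEQ_Suc[OF l] by (simp add: s_def)
  ultimately have "\<sigma> l = l" using LIMSEQ_unique by blast
  then have "l = P" using below[of l] lPQ by fastforce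
  then show ?thesis using l[unfolded s_def] by simp
qed

lemma funpow_tendsto_fixed_point_right:
  fixes \<sigma> :: "real \<Rightarrow> real"
  assumes cont: "continuous_on {P..Q} \<sigma>" and mono: "mono_on {P..Q} \<sigma>" and PQ: "P \<le> Q"
    and fixed: "\<sigma> Q = Q" and above: "\<And>x. P \<le> x \<Longrightarrow> x < Q \<Longrightarrow> x < \<sigma> x"
  shows "(\<lambda>n. (\<sigma>^^n) P) \<longlonglongrightarrow> Q"
proof -
  define \<rho> where "\<rho> x = - \<sigma> (- x)" for x
  have "((\<rho>^^n) (- P)) = - (\<sigma>^^n) P" for n by (induction n) (simp_all add: \<rho>_def)
  moreover have "(\<lambda>n. (\<rho>^^n) (- P)) \<longlonglongrightarrow> - Q"
  proof (rule funpow_tendsto_fixed_point_left)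
    have "continuous_on {-Q..-P} (\<sigma> \<circ> uminus)"
      by (intro continuous_on_compose continuous_intros continuous_on_subset[OF cont]) auto
    then show "continuous_on {-Q..-P} \<rho>"
      unfolding \<rho>_def by (intro continuous_intros) (simp add: o_def)
    show "mono_on {-Q..-P} \<rho>" unfolding \<rho>_def by (rule mono_onI) (simp add: mono_onD[OF mono])
    show "\<rho> x < x" if "- Q < x" "x \<le> - P" for x using above[of "- x"] that by (auto simp: \<rho>_def)
  qed (use PQ fixed in \<open>auto simp: \<rho>_def\<close>)
  ultimately have "(\<lambda>n. - (\<sigma>^^n) P) \<longlonglongrightarrow> - Q" by simp
  from tendsto_minus[OF this] show ?thesis by simp
qed

section \<open>Kopell-type lemmas\<close>

lemma not_all_zeros_decreasing:
  fixes \<phi> :: "real \<Rightarrow> real"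
  assumes lh: "lo < hi" and cont: "continuous_on {lo..hi} \<phi>" and z1: "\<phi> lo = 0" and z2: "\<phi> hi = 0"
    and der: "\<And>y. y \<in> {lo..hi} \<Longrightarrow> \<phi> y = 0 \<Longrightarrow> \<exists>d<0. (\<phi> has_real_derivative d) (at y within {lo..hi})"
  shows False
proof -
  obtain d0 where d0: "d0 < 0" "(\<phi> has_real_derivative d0) (at lo within {lo..hi})"
    using der[of lo] lh z1 by auto
  obtain e where e: "e > 0" "\<forall>h>0. lo + h \<in> {lo..hi} \<longrightarrow> h < e \<longrightarrow> \<phi> lo > \<phi> (lo + h)"
    using has_real_derivative_neg_dec_right[OF d0(2) d0(1)] by blast
  define m where "m = lo + min e (hi - lo) / 2"
  have m: "lo < m" "m < hi" unfolding m_def min_def using e(1) lh by (auto simp: field_simps)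
  have phim: "\<phi> m < 0" using e(2)[rule_format, of "m - lo"] m z1 by (auto simp: m_def)
  define Z where "Z = {y \<in> {m..hi}. \<phi> y = 0}"
  have cZ: "closed Z" unfolding Z_def
    by (rule continuous_closed_preimage_constant) (use cont m in \<open>auto intro: continuous_on_subset\<close>)
  have hiZ: "hi \<in> Z" using z2 m by (auto simp: Z_def)
  have bZ: "bdd_below Z" by (auto simp: Z_def bdd_below_def)
  define s where "s = Inf Z"
  have sZ: "s \<in> Z" unfolding s_def using closed_contains_Inf[OF _ bZ cZ] hiZ by auto
  have sm: "m < s" using sZ phim by (auto simp: Z_def le_less)
  have neg: "\<phi> y < 0" if my: "m \<le> y" "y < s" for y
  proof (rule ccontr)
    assume "\<not> \<phi> y < 0"
    have "continuous_on {m..y} \<phi>"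
      using cont sZ m that by (auto simp: Z_def intro: continuous_on_subset)
    then obtain x where x: "m \<le> x" "x \<le> y" "\<phi> x = 0"
      using IVT'[of \<phi> m 0 y] phim my \<open>\<not> \<phi> y < 0\<close> by auto
    then have "x \<in> Z" using my sZ by (auto simp: Z_def)
    then show False using cInf_lower[OF _ bZ, of x] x my by (auto simp: s_def)
  qed
  obtain d1 where d1: "d1 < 0" "(\<phi> has_real_derivative d1) (at s within {lo..hi})"
    using der[of s] sZ m by (auto simp: Z_def)
  obtain e1 where e1: "e1 > 0" "\<forall>h>0. s - h \<in> {lo..hi} \<longrightarrow> h < e1 \<longrightarrow> \<phi> s < \<phi> (s - h)"
    using has_real_derivative_neg_dec_left[OF d1(2) d1(1)] by blast
  define h where "h = min e1 (s - m) / 2"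
  have h: "h > 0" "h < e1" "h < s - m" using e1 sm by (auto simp: h_def)
  have "\<phi> s < \<phi> (s - h)" using e1 h sm m sZ by (auto simp: Z_def)
  moreover have "\<phi> (s - h) < 0" using neg[of "s - h"] h by auto
  ultimately show False using sZ by (auto simp: Z_def)
qed

lemma commuting_fixed_point_deriv_eq:
  fixes W \<phi> :: "real \<Rightarrow> real"
  assumes ab: "a < b"
    and Wi: "\<forall>x\<in>{a..b}. W x \<in> {a..b}"
    and Wd: "\<forall>x\<in>{a..b}. (W has_real_derivative W' x) (at x within {a..b})"
    and \<phi>i: "\<forall>x\<in>{a..b}. \<phi> x \<in> {a..b}"
    and \<phi>d: "(\<phi> has_real_derivative D) (at y within {a..b})" and D: "D \<noteq> 0"
    and comm: "\<forall>x\<in>{a..b}. \<phi> (W x) = W (\<phi> x)"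
    and y: "y \<in> {a..b}" "W y = y"
  shows "W' (\<phi> y) = W' y"
proof -
  let ?I = "{a..b}"
  have "\<phi> ` ?I \<subseteq> ?I" using \<phi>i by auto
  then have L: "(W \<circ> \<phi> has_real_derivative W' (\<phi> y) * D) (at y within ?I)"
    using DERIV_image_chain[OF DERIV_subset[OF Wd[rule_format]] \<phi>d] \<phi>i y(1) by blast
  have "W ` ?I \<subseteq> ?I" using Wi by auto
  then have "(\<phi> has_real_derivative D) (at (W y) within W ` ?I)"
    using DERIV_subset[OF \<phi>d] y(2) by simp
  then have "(\<phi> \<circ> W has_real_derivative D * W' y) (at y within ?I)"
    by (rule DERIV_image_chain[OF _ Wd[rule_format, OF y(1)]])
  then have R: "(W \<circ> \<phi> has_real_derivative D * W' y) (at y within ?I)"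
    by (rule has_field_derivative_transform_within[OF _ zero_less_one y(1)]) (simp add: comm)
  have "W' (\<phi> y) * D = D * W' y" by (rule has_real_derivative_unique_Icc[OF ab y(1) L R])
  then show ?thesis using D by simp
qed

lemma funpow_tendsto_between:
  fixes c :: "real \<Rightarrow> real"
  assumes ci: "\<forall>x\<in>{a..b}. c x \<in> {a..b}" and cm: "strict_mono_on {a..b} c" and z: "z \<in> {a..b}"
  obtains e where "e \<in> {a..b}"
    "\<And>y. y \<in> {min z (c z)..max z (c z)} \<Longrightarrow> (\<lambda>k. (c^^k) y) \<longlonglongrightarrow> e"
proof -
  let ?I = "{a..b}"
  have czI: "c z \<in> ?I" using ci z by auto
  have mk: "(c^^k) x \<le> (c^^k) y" if "x \<in> ?I" "y \<in> ?I" "x \<le> y" for k x y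
    using strict_mono_on_leD[OF strict_mono_on_funpow[OF ci cm] that] .
  have sucz: "(c^^Suc k) z = (c^^k) (c z)" for k by (simp add: funpow_swap1)
  have bnd: "a \<le> (c^^k) z" "(c^^k) z \<le> b" for k using funpow_maps_into[OF ci z] by auto
  obtain e where e: "(\<lambda>k. (c^^k) z) \<longlonglongrightarrow> e"
  proof (cases "z \<le> c z")
    case True
    have "incseq (\<lambda>k. (c^^k) z)" by (rule incseq_SucI, subst sucz, rule mk[OF z czI True])
    then show ?thesis by (rule incseq_convergent[OF _ allI[OF bnd(2)]]) (rule that)
  next
    case False
    have "decseq (\<lambda>k. (c^^k) z)"
      by (rule decseq_SucI, subst sucz, rule mk[OF czI z]) (use False in simp)
    then show ?thesis by (rule decseq_convergent[OF _ allI[OF bnd(1)]]) (rule that)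
  qed
  have eI: "e \<in> ?I" using LIMSEQ_le_const[OF e, of a] LIMSEQ_le_const2[OF e, of b] bnd by auto
  have e2: "(\<lambda>k. (c^^k) (c z)) \<longlonglongrightarrow> e" using LIMSEQ_Suc[OF e] by (simp add: funpow_swap1)
  have lo: "(\<lambda>k. (c^^k) (min z (c z))) \<longlonglongrightarrow> e" using e e2 by (auto simp: min_def)
  have hi: "(\<lambda>k. (c^^k) (max z (c z))) \<longlonglongrightarrow> e" using e e2 by (auto simp: max_def)
  show ?thesis
  proof (rule that[OF eI], rule tendsto_sandwich[OF _ _ lo hi])
    fix y assume y: "y \<in> {min z (c z)..max z (c z)}"
    have "min z (c z) \<in> ?I" "max z (c z) \<in> ?I" "y \<in> ?I" using y z czI by auto
    then show "\<forall>\<^sub>F k in sequentially. (c^^k) (min z (c z)) \<le> (c^^k) y"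
      "\<forall>\<^sub>F k in sequentially. (c^^k) y \<le> (c^^k) (max z (c z))"
      using y by (intro always_eventually allI mk; simp)+
  qed
qed

text \<open>The derivative of \<open>W\<close> is the same at all fixed points
  in one orbit of \<open>c\<close>, hence, by continuity, at all fixed points between \<open>z\<close> and \<open>c z\<close>; if it
  were \<open>< 1\<close>, the graph of \<open>W\<close> would cross the diagonal downwards at each of them.\<close>
lemma commuting_fixed_point_deriv_ge_1:
  fixes W c W' c' :: "real \<Rightarrow> real"
  assumes ab: "a < b"
    and Wi: "\<forall>x\<in>{a..b}. W x \<in> {a..b}"
    and Wd: "\<forall>x\<in>{a..b}. (W has_real_derivative W' x) (at x within {a..b})"
    and Wc: "continuous_on {a..b} W'"
    and ci: "\<forall>x\<in>{a..b}. c x \<in> {a..b}"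
    and cd: "\<forall>x\<in>{a..b}. (c has_real_derivative c' x) (at x within {a..b})"
    and cpos: "\<forall>x\<in>{a..b}. c' x > 0"
    and comm: "\<forall>x\<in>{a..b}. c (W x) = W (c x)"
    and z: "z \<in> {a..b}" "W z = z" "c z \<noteq> z"
  shows "1 \<le> W' z"
proof (rule ccontr)
  assume "\<not> 1 \<le> W' z"
  let ?I = "{a..b}"
  have cm: "strict_mono_on ?I c" by (rule has_real_derivative_pos_imp_strict_mono_on[OF cd cpos])
  obtain e where eI: "e \<in> ?I"
    and lim: "\<And>y. y \<in> {min z (c z)..max z (c z)} \<Longrightarrow> (\<lambda>k. (c^^k) y) \<longlonglongrightarrow> e"
    using funpow_tendsto_between[OF ci cm z(1)] by blast
  define lo where "lo = min z (c z)"
  define hi where "hi = max z (c z)"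
  have lohi: "lo < hi" using z(3) by (auto simp: lo_def hi_def min_def max_def)
  have lohiI: "{lo..hi} \<subseteq> ?I" using z ci by (auto simp: lo_def hi_def)
  have W'_fixed: "W' y = W' e" if y: "y \<in> {lo..hi}" "W y = y" for y
  proof -
    have yI: "y \<in> ?I" using y lohiI by auto
    have "W' ((c^^k) y) = W' y" for k
    proof (rule commuting_fixed_point_deriv_eq[OF ab Wi Wd _ _ _ _ yI y(2)])
      show "((c^^k) has_real_derivative (\<Prod>j<k. c' ((c^^j) y))) (at y within ?I)"
        by (rule funpow_has_real_derivative[OF ci cd yI])
      show "(\<Prod>j<k. c' ((c^^j) y)) \<noteq> 0"
        using funpow_maps_into[OF ci yI] cpos by (simp add: prod_pos less_imp_neq[symmetric])
      show "\<forall>x\<in>?I. (c^^k) (W x) = W ((c^^k) x)"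
        using funpow_commute_on[OF ci comm] by blast
    qed (use funpow_maps_into[OF ci] in blast)
    moreover have "(\<lambda>k. (c^^k) y) \<longlonglongrightarrow> e" using lim y(1) by (simp add: lo_def hi_def)
    then have "(\<lambda>k. W' ((c^^k) y)) \<longlonglongrightarrow> W' e"
      by (rule continuous_on_tendsto_compose[OF Wc _ eI]) (use funpow_maps_into[OF ci yI] in auto)
    ultimately show ?thesis by (simp add: LIMSEQ_const_iff)
  qed
  show False
  proof (rule not_all_zeros_decreasing[OF lohi, of "\<lambda>x. W x - x"])
    have "continuous_on ?I W"
      using Wd by (meson DERIV_continuous continuous_on_eq_continuous_within)
    then show "continuous_on {lo..hi} (\<lambda>x. W x - x)"
      by (intro continuous_intros continuous_on_subset[OF _ lohiI])
    have "W (c z) = c z" using comm z by metis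
    then show "W lo - lo = 0" "W hi - hi = 0"
      using z by (auto simp: lo_def hi_def min_def max_def)
    fix y assume y: "y \<in> {lo..hi}" "W y - y = 0"
    have "((\<lambda>x. W x - x) has_real_derivative W' y - 1) (at y within {lo..hi})"
      using y lohiI by (intro derivative_intros DERIV_subset[OF Wd[rule_format] lohiI]) auto
    moreover have "W' y - 1 < 0"
      using W'_fixed[of y] y W'_fixed[of z] z \<open>\<not> 1 \<le> W' z\<close> by (auto simp: lo_def hi_def)
    ultimately show "\<exists>d<0. ((\<lambda>x. W x - x) has_real_derivative d) (at y within {lo..hi})" by blast
  qed
qed

lemma funpow_lipschitz_on_Icc:
  fixes W W' :: "real \<Rightarrow> real"
  assumes Wd: "\<forall>x\<in>{a..b}. (W has_real_derivative W' x) (at x within {a..b})"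
    and K: "{p..q} \<subseteq> {a..b}" and WK: "\<forall>x\<in>{p..q}. W x \<in> {p..q}"
    and W'_le: "\<forall>x\<in>{p..q}. \<bar>W' x\<bar> \<le> \<theta>"
    and x: "x \<in> {p..q}" and y: "y \<in> {p..q}"
  shows "\<bar>(W^^j) x - (W^^j) y\<bar> \<le> \<theta>^j * \<bar>x - y\<bar>"
proof -
  have lip: "\<bar>W x - W y\<bar> \<le> \<theta> * \<bar>x - y\<bar>" if "x \<in> {p..q}" "y \<in> {p..q}" for x y
  proof -
    have sub: "{min x y..max x y} \<subseteq> {p..q}" using that by auto
    then obtain \<xi> where \<xi>: "\<xi> \<in> {p..q}" "W y - W x = W' \<xi> * (y - x)"
      using mvt_within_between[OF Wd, of x y] K by blast
    then have "\<bar>W' \<xi> * (y - x)\<bar> \<le> \<theta> * \<bar>x - y\<bar>"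
      using W'_le by (simp add: abs_mult abs_minus_commute mult_right_mono)
    then show ?thesis using \<xi>(2) by (simp add: abs_minus_commute)
  qed
  have \<theta>: "0 \<le> \<theta>" using W'_le x by force
  show ?thesis
  proof (induction j)
    case (Suc j)
    have "\<bar>(W^^Suc j) x - (W^^Suc j) y\<bar> \<le> \<theta> * \<bar>(W^^j) x - (W^^j) y\<bar>"
      using lip funpow_maps_into[OF WK] x y by simp
    also have "\<dots> \<le> \<theta> * (\<theta>^j * \<bar>x - y\<bar>)" using Suc \<theta> by (simp add: mult_left_mono)
    finally show ?case by (simp add: mult.assoc)
  qed simp
qed

text \<open>The logarithmic distortion of \<open>W^^m\<close> on \<open>{p..q}\<close> is bounded by \<open>L\<close> times the sum of
  the \<open>t\<close>-th powers of the lengths of the images \<open>(W^^j) ` {p..q}\<close>, a geometric series.\<close>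
lemma funpow_contraction_bounded_distortion:
  fixes W W' :: "real \<Rightarrow> real"
  assumes Wi: "\<forall>x\<in>{a..b}. W x \<in> {a..b}"
    and Wd: "\<forall>x\<in>{a..b}. (W has_real_derivative W' x) (at x within {a..b})"
    and W'_pos: "\<forall>x\<in>{a..b}. W' x > 0"
    and W'_hoelder: "\<forall>x\<in>{a..b}. \<forall>y\<in>{a..b}. W' x \<le> W' y * exp (L * \<bar>x - y\<bar> powr t)"
    and L: "L \<ge> 0" and t: "t > 0"
    and K: "{p..q} \<subseteq> {a..b}" and WK: "\<forall>x\<in>{p..q}. W x \<in> {p..q}"
    and W'_le: "\<forall>x\<in>{p..q}. W' x \<le> \<theta>" and \<theta>: "0 < \<theta>" "\<theta> < 1"
  shows "\<exists>E>0. \<forall>m. \<forall>x\<in>{p..q}. \<forall>y\<in>{p..q}.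
    (\<Prod>j<m. W' ((W^^j) x)) \<le> (\<Prod>j<m. W' ((W^^j) y)) * E"
proof -
  define r where "r = \<theta> powr t"
  have r: "0 < r" "r < 1" using \<theta> t powr_less_mono2[of t \<theta> 1] by (auto simp: r_def)
  define E where "E = exp (L * ((q - p) powr t / (1 - r)))"
  have "(\<Prod>j<m. W' ((W^^j) x)) \<le> (\<Prod>j<m. W' ((W^^j) y)) * E"
    if xy: "x \<in> {p..q}" "y \<in> {p..q}" for m x y
  proof -
    have xjI: "(W^^j) x \<in> {a..b}" and yjI: "(W^^j) y \<in> {a..b}" for j
      using funpow_maps_into[OF WK] xy K by blast+
    have "(\<Prod>j<m. W' ((W^^j) x))
        \<le> (\<Prod>j<m. W' ((W^^j) y) * exp (L * \<bar>(W^^j) x - (W^^j) y\<bar> powr t))"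
    proof (rule prod_mono)
      fix j
      show "0 \<le> W' ((W^^j) x) \<and>
          W' ((W^^j) x) \<le> W' ((W^^j) y) * exp (L * \<bar>(W^^j) x - (W^^j) y\<bar> powr t)"
        using W'_hoelder xjI[of j] yjI[of j] W'_pos by (simp add: less_imp_le)
    qed
    also have "\<dots> = (\<Prod>j<m. W' ((W^^j) y)) * exp (L * (\<Sum>j<m. \<bar>(W^^j) x - (W^^j) y\<bar> powr t))"
      by (simp add: prod.distrib exp_sum sum_distrib_left)
    also have "\<dots> \<le> (\<Prod>j<m. W' ((W^^j) y)) * E"
    proof -
      have "(\<Sum>j<m. \<bar>(W^^j) x - (W^^j) y\<bar> powr t) \<le> (\<Sum>j<m. r^j * (q - p) powr t)"
      proof (rule sum_mono)
        fix j
        have "\<forall>x\<in>{p..q}. \<bar>W' x\<bar> \<le> \<theta>" using W'_le W'_pos K by fastforce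
        then have "\<bar>(W^^j) x - (W^^j) y\<bar> \<le> \<theta>^j * \<bar>x - y\<bar>"
          by (rule funpow_lipschitz_on_Icc[OF Wd K WK _ xy])
        also have "\<dots> \<le> \<theta>^j * (q - p)" using xy \<theta> by (intro mult_left_mono) auto
        finally have "\<bar>(W^^j) x - (W^^j) y\<bar> powr t \<le> (\<theta>^j * (q - p)) powr t"
          using t by (intro powr_mono2) auto
        also have "\<dots> = r^j * (q - p) powr t"
          using \<theta> xy by (simp add: powr_mult powr_power_base r_def)
        finally show "\<bar>(W^^j) x - (W^^j) y\<bar> powr t \<le> r^j * (q - p) powr t" .
      qed
      also have "\<dots> = (q - p) powr t * (\<Sum>j<m. r^j)" by (simp add: sum_distrib_right mult.commute)
      also have "\<dots> = (q - p) powr t * ((1 - r^m) / (1 - r))" using sum_gp_strict[of r m] r by simp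
      also have "\<dots> \<le> (q - p) powr t / (1 - r)"
        using r by (simp add: divide_right_mono mult_left_le)
      finally have "exp (L * (\<Sum>j<m. \<bar>(W^^j) x - (W^^j) y\<bar> powr t)) \<le> E"
        unfolding E_def using mult_left_mono[OF _ L] by (simp del: times_divide_eq_right)
      moreover have "0 \<le> (\<Prod>j<m. W' ((W^^j) y))"
        using W'_pos yjI by (simp add: prod_nonneg less_imp_le)
      ultimately show ?thesis by (simp add: mult_left_mono)
    qed
    finally show ?thesis .
  qed
  then show ?thesis by (intro exI[of _ E]) (simp add: E_def)
qed

lemma funpow_contraction_ratio_distortion:
  fixes W W' :: "real \<Rightarrow> real"
  assumes Wi: "\<forall>x\<in>{a..b}. W x \<in> {a..b}"
    and Wd: "\<forall>x\<in>{a..b}. (W has_real_derivative W' x) (at x within {a..b})"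
    and W'_pos: "\<forall>x\<in>{a..b}. W' x > 0"
    and W'_hoelder: "\<forall>x\<in>{a..b}. \<forall>y\<in>{a..b}. W' x \<le> W' y * exp (L * \<bar>x - y\<bar> powr t)"
    and L: "L \<ge> 0" and t: "t > 0"
    and K: "{p..q} \<subseteq> {a..b}" and WK: "\<forall>x\<in>{p..q}. W x \<in> {p..q}"
    and W'_le: "\<forall>x\<in>{p..q}. W' x \<le> \<theta>" and \<theta>: "0 < \<theta>" "\<theta> < 1"
  obtains E where "E > 0" "\<And>m x1 y1 x2 y2. x1 \<in> {p..q} \<Longrightarrow> y1 \<in> {p..q} \<Longrightarrow> x2 \<in> {p..q} \<Longrightarrow>
    y2 \<in> {p..q} \<Longrightarrow> \<bar>(W^^m) x2 - (W^^m) y2\<bar> * \<bar>x1 - y1\<bar>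
      \<le> E * \<bar>(W^^m) x1 - (W^^m) y1\<bar> * \<bar>x2 - y2\<bar>"
proof -
  define D where "D m x = (\<Prod>j<m. W' ((W^^j) x))" for m x
  obtain E where E: "E > 0" "\<And>m x y. x \<in> {p..q} \<Longrightarrow> y \<in> {p..q} \<Longrightarrow> D m x \<le> D m y * E"
    using funpow_contraction_bounded_distortion[OF Wi Wd W'_pos W'_hoelder L t K WK W'_le \<theta>]
    unfolding D_def by blast
  have mvt: "\<exists>\<xi>\<in>{p..q}. \<bar>(W^^m) x - (W^^m) y\<bar> = D m \<xi> * \<bar>x - y\<bar>"
    if "x \<in> {p..q}" "y \<in> {p..q}" for m x y
  proof -
    have "\<forall>x\<in>{a..b}. ((W^^m) has_real_derivative D m x) (at x within {a..b})"
      unfolding D_def using funpow_has_real_derivative[OF Wi Wd] by blast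
    moreover have "{min y x..max y x} \<subseteq> {p..q}" using that by auto
    ultimately obtain \<xi> where "\<xi> \<in> {p..q}" "(W^^m) x - (W^^m) y = D m \<xi> * (x - y)"
      using mvt_within_between[of "{a..b}" "W^^m" "D m" y x] K by blast
    moreover have "D m \<xi> > 0"
      unfolding D_def using funpow_maps_into[OF Wi] W'_pos K \<open>\<xi> \<in> {p..q}\<close> by (auto intro: prod_pos)
    ultimately show ?thesis by (auto simp: abs_mult)
  qed
  show ?thesis
  proof (rule that[OF E(1)])
    fix m x1 y1 x2 y2 assume xy: "x1 \<in> {p..q}" "y1 \<in> {p..q}" "x2 \<in> {p..q}" "y2 \<in> {p..q}"
    obtain \<xi>1 \<xi>2 where \<xi>: "\<xi>1 \<in> {p..q}" "\<bar>(W^^m) x1 - (W^^m) y1\<bar> = D m \<xi>1 * \<bar>x1 - y1\<bar>"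
      "\<xi>2 \<in> {p..q}" "\<bar>(W^^m) x2 - (W^^m) y2\<bar> = D m \<xi>2 * \<bar>x2 - y2\<bar>"
      using mvt[OF xy(1,2)] mvt[OF xy(3,4)] by blast
    have "\<bar>(W^^m) x2 - (W^^m) y2\<bar> * \<bar>x1 - y1\<bar> = D m \<xi>2 * (\<bar>x1 - y1\<bar> * \<bar>x2 - y2\<bar>)"
      using \<xi>(4) by simp
    also have "\<dots> \<le> D m \<xi>1 * E * (\<bar>x1 - y1\<bar> * \<bar>x2 - y2\<bar>)"
      using E(2)[OF \<xi>(3,1)] by (intro mult_right_mono) auto
    also have "\<dots> = E * \<bar>(W^^m) x1 - (W^^m) y1\<bar> * \<bar>x2 - y2\<bar>" using \<xi>(2) by simp
    finally show "\<bar>(W^^m) x2 - (W^^m) y2\<bar> * \<bar>x1 - y1\<bar> \<le> E * \<bar>(W^^m) x1 - (W^^m) y1\<bar> * \<bar>x2 - y2\<bar>" .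
  qed
qed

lemma fixed_endpoints_small_displacement:
  fixes c c' :: "real \<Rightarrow> real"
  assumes cd: "\<forall>x\<in>{a..b}. (c has_real_derivative c' x) (at x within {a..b})"
    and cc: "continuous_on {a..b} c'" and \<eta>: "\<eta> > 0"
  obtains \<delta> where "\<delta> > 0" "\<And>A B T. a \<le> A \<Longrightarrow> A \<le> T \<Longrightarrow> T \<le> B \<Longrightarrow> B \<le> b \<Longrightarrow> B - A < \<delta>
      \<Longrightarrow> c A = A \<Longrightarrow> c B = B \<Longrightarrow> \<bar>c T - T\<bar> \<le> \<eta> * (T - A)"
proof -
  let ?I = "{a..b}"
  have "uniformly_continuous_on ?I c'" by (rule compact_uniformly_continuous[OF cc compact_Icc])
  then obtain \<delta> where \<delta>: "\<delta> > 0" "\<forall>x\<in>?I. \<forall>x'\<in>?I. dist x' x < \<delta> \<longrightarrow> dist (c' x') (c' x) < \<eta>"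
    using \<eta> unfolding uniformly_continuous_on_def by metis
  have "\<bar>c T - T\<bar> \<le> \<eta> * (T - A)"
    if ATB: "a \<le> A" "A \<le> T" "T \<le> B" "B \<le> b" "B - A < \<delta>" and fixed: "c A = A" "c B = B" for A B T
  proof (cases "A = B")
    case True
    then show ?thesis using ATB fixed by simp
  next
    case False
    obtain s where s: "s \<in> {A..B}" "c B - c A = c' s * (B - A)"
      using mvt_within[OF cd, of A B] ATB by auto
    have "c' s = 1" using s(2) fixed ATB False by simp
    have near: "\<bar>c' u - 1\<bar> \<le> \<eta>" if "u \<in> {A..B}" for u
    proof -
      have "u \<in> ?I" "s \<in> ?I" "dist u s < \<delta>" using that s(1) ATB by (auto simp: dist_real_def)
      then have "dist (c' u) (c' s) < \<eta>" using \<delta>(2) by blast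
      then show ?thesis using \<open>c' s = 1\<close> by (simp add: dist_real_def)
    qed
    have "\<forall>x\<in>?I. ((\<lambda>x. c x - x) has_real_derivative c' x - 1) (at x within ?I)"
      using cd by (auto intro!: derivative_intros)
    then obtain \<xi> where \<xi>: "\<xi> \<in> {A..T}" "(c T - T) - (c A - A) = (c' \<xi> - 1) * (T - A)"
      using mvt_within[of ?I "\<lambda>x. c x - x" "\<lambda>x. c' x - 1" A T] ATB by auto
    then have "\<bar>c T - T\<bar> = \<bar>c' \<xi> - 1\<bar> * (T - A)" using fixed ATB by (simp add: abs_mult)
    also have "\<dots> \<le> \<eta> * (T - A)" using near[of \<xi>] \<xi>(1) ATB by (intro mult_right_mono) auto
    finally show ?thesis .
  qed
  then show ?thesis using that \<delta>(1) by blast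
qed

text \<open>If \<open>c\<close> moved \<open>y\<close>, the images \<open>[A, B]\<close> of \<open>[\<alpha>, \<beta>]\<close> under \<open>W^^m\<close> would be arbitrarily
  short intervals with both ends fixed by \<open>c\<close>, on which \<open>c\<close> is close to the identity in \<open>C\<^sup>1\<close>.
  Bounded distortion of \<open>W^^m\<close> keeps the displacement \<open>c T - T\<close> of \<open>T = (W^^m) y\<close> comparable
  to \<open>T - A\<close>, a contradiction.\<close>
lemma commuting_contraction_fixes_between:
  fixes W c W' c' :: "real \<Rightarrow> real"
  assumes Wi: "\<forall>x\<in>{a..b}. W x \<in> {a..b}"
    and Wd: "\<forall>x\<in>{a..b}. (W has_real_derivative W' x) (at x within {a..b})"
    and W'_pos: "\<forall>x\<in>{a..b}. W' x > 0"
    and W'_hoelder: "\<forall>x\<in>{a..b}. \<forall>y\<in>{a..b}. W' x \<le> W' y * exp (L * \<bar>x - y\<bar> powr t)"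
    and L: "L \<ge> 0" and t: "t > 0"
    and K: "{p..q} \<subseteq> {a..b}" and WK: "\<forall>x\<in>{p..q}. W x \<in> {p..q}"
    and W'_le: "\<forall>x\<in>{p..q}. W' x \<le> \<theta>" and \<theta>: "0 < \<theta>" "\<theta> < 1"
    and ci: "\<forall>x\<in>{a..b}. c x \<in> {a..b}"
    and cd: "\<forall>x\<in>{a..b}. (c has_real_derivative c' x) (at x within {a..b})"
    and c'_pos: "\<forall>x\<in>{a..b}. c' x > 0" and c'_cont: "continuous_on {a..b} c'"
    and comm: "\<forall>x\<in>{a..b}. c (W x) = W (c x)"
    and y: "p \<le> \<alpha>" "\<alpha> < y" "y < \<beta>" "\<beta> \<le> q" "c \<alpha> = \<alpha>" "c \<beta> = \<beta>"
  shows "c y = y"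
proof (rule ccontr)
  assume "c y \<noteq> y"
  obtain E where E: "E > 0" and ratio: "\<And>m x1 y1 x2 y2. x1 \<in> {p..q} \<Longrightarrow> y1 \<in> {p..q} \<Longrightarrow>
      x2 \<in> {p..q} \<Longrightarrow> y2 \<in> {p..q} \<Longrightarrow> \<bar>(W^^m) x2 - (W^^m) y2\<bar> * \<bar>x1 - y1\<bar>
        \<le> E * \<bar>(W^^m) x1 - (W^^m) y1\<bar> * \<bar>x2 - y2\<bar>"
    using funpow_contraction_ratio_distortion[OF Wi Wd W'_pos W'_hoelder L t K WK W'_le \<theta>] by blast
  have inI: "\<alpha> \<in> {a..b}" "\<beta> \<in> {a..b}" "y \<in> {a..b}" using y K by auto
  have "strict_mono_on {a..b} c" by (rule has_real_derivative_pos_imp_strict_mono_on[OF cd c'_pos])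
  then have "\<alpha> < c y" "c y < \<beta>" using strict_mono_onD inI y by metis+
  then have inK: "\<alpha> \<in> {p..q}" "\<beta> \<in> {p..q}" "y \<in> {p..q}" "c y \<in> {p..q}" using y by auto
  define d0 where "d0 = \<bar>c y - y\<bar>"
  have d0: "d0 > 0" using \<open>c y \<noteq> y\<close> by (simp add: d0_def)
  define \<eta> where "\<eta> = d0 / (2 * E * (q - p + 1))"
  have \<eta>: "\<eta> > 0" using d0 E y by (simp add: \<eta>_def)
  obtain \<delta> where \<delta>: "\<delta> > 0" and small: "\<And>A B T. a \<le> A \<Longrightarrow> A \<le> T \<Longrightarrow> T \<le> B \<Longrightarrow> B \<le> b
      \<Longrightarrow> B - A < \<delta> \<Longrightarrow> c A = A \<Longrightarrow> c B = B \<Longrightarrow> \<bar>c T - T\<bar> \<le> \<eta> * (T - A)"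
    using fixed_endpoints_small_displacement[OF cd c'_cont \<eta>] by blast
  obtain m where m: "\<theta>^m < \<delta> / (q - p + 1)"
    using real_arch_pow_inv[of "\<delta> / (q - p + 1)" \<theta>] \<delta> \<theta> y by auto
  define A where "A = (W^^m) \<alpha>"
  define B where "B = (W^^m) \<beta>"
  define T where "T = (W^^m) y"
  have "strict_mono_on {a..b} (W^^m)"
    by (rule strict_mono_on_funpow[OF Wi has_real_derivative_pos_imp_strict_mono_on[OF Wd W'_pos]])
  then have AT: "A < T" "T < B" unfolding A_def B_def T_def using strict_mono_onD inI y by metis+
  have "\<forall>x\<in>{p..q}. \<bar>W' x\<bar> \<le> \<theta>" using W'_le W'_pos K by fastforce
  then have "B - A \<le> \<theta>^m * (\<beta> - \<alpha>)"
    using funpow_lipschitz_on_Icc[OF Wd K WK _ inK(2,1), of \<theta> m] AT y by (simp add: A_def B_def)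
  also have "\<dots> < \<delta>"
    using y \<theta> m by (smt (verit) mult_left_mono pos_less_divide_eq zero_le_power)
  finally have "B - A < \<delta>" .
  moreover have comm': "\<forall>x\<in>{a..b}. W (c x) = c (W x)" using comm by simp
  then have "c A = A" "c B = B" "c T = (W^^m) (c y)"
    unfolding A_def B_def T_def
    using funpow_commute_on[OF Wi comm' inI(1), of m] funpow_commute_on[OF Wi comm' inI(2), of m]
      funpow_commute_on[OF Wi comm' inI(3), of m] y(5,6)
    by simp_all
  moreover have "A \<in> {p..q}" "B \<in> {p..q}"
    unfolding A_def B_def using funpow_maps_into[OF WK] inK by blast+
  then have "a \<le> A" "B \<le> b" using K by auto
  ultimately have "\<bar>c T - T\<bar> \<le> \<eta> * (T - A)" using small[of A T B] AT by simp
  have "(T - A) * d0 \<le> E * \<bar>c T - T\<bar> * (y - \<alpha>)"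
    using ratio[OF inK(4,3,3,1), of m] \<open>c T = (W^^m) (c y)\<close> AT y
    by (simp add: A_def T_def d0_def)
  also have "\<dots> \<le> E * (\<eta> * (T - A)) * (y - \<alpha>)"
    using \<open>\<bar>c T - T\<bar> \<le> \<eta> * (T - A)\<close> E y by (intro mult_right_mono mult_left_mono) auto
  finally have "(T - A) * d0 \<le> (T - A) * (E * \<eta> * (y - \<alpha>))" by (simp add: algebra_simps)
  then have "d0 \<le> E * \<eta> * (y - \<alpha>)" using AT by simp
  also have "\<dots> \<le> E * \<eta> * (q - p)" using y \<eta> E by (intro mult_left_mono) auto
  also have "\<dots> < d0"
  proof -
    have "E * \<eta> * (q - p) = d0 * (q - p) / (2 * (q - p + 1))" using E by (simp add: \<eta>_def)
    moreover have "d0 * (q - p) < d0 * (2 * (q - p + 1))" using d0 y by simp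
    ultimately show ?thesis using y by (simp add: pos_divide_less_eq)
  qed
  finally show False by simp
qed

section \<open>Ping-pong and contracting words\<close>

abbreviation bool_lists :: "nat \<Rightarrow> bool list set" where
  "bool_lists k \<equiv> {xs. length xs = k}"

lemma finite_bool_lists: "finite (bool_lists k)"
  using finite_lists_length_eq[of "UNIV :: bool set" k] by simp

lemma card_bool_lists: "card (bool_lists k) = 2 ^ k"
  using card_lists_length_eq[of "UNIV :: bool set" k] by simp

lemma sum_bool_lists_Suc_Cons:
  fixes f :: "bool list \<Rightarrow> 'a :: comm_monoid_add"
  shows "(\<Sum>ws\<in>bool_lists (Suc k). f ws)
    = (\<Sum>ws\<in>bool_lists k. f (True # ws) + f (False # ws))"
proof -
  have eq: "bool_lists (Suc k) = Cons True ` (bool_lists k) \<union> Cons False ` (bool_lists k)"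
    by (auto simp: length_Suc_conv)
  show ?thesis unfolding eq
    by (subst sum.union_disjoint) (auto simp: finite_bool_lists sum.reindex sum.distrib)
qed

lemma sum_bool_lists_Suc_snoc:
  fixes f :: "bool list \<Rightarrow> 'a :: comm_monoid_add"
  shows "(\<Sum>ws\<in>bool_lists (Suc k). f ws)
    = (\<Sum>ws\<in>bool_lists k. f (ws @ [True]) + f (ws @ [False]))"
proof -
  have eq: "bool_lists (Suc k)
      = (\<lambda>ws. ws @ [True]) ` (bool_lists k) \<union> (\<lambda>ws. ws @ [False]) ` (bool_lists k)"
  proof (intro equalityI subsetI)
    fix xs :: "bool list" assume "xs \<in> bool_lists (Suc k)"
    then obtain s ys where "xs = ys @ [s]" "length ys = k" by (cases xs rule: rev_cases) auto
    then show "xs \<in> (\<lambda>ws. ws @ [True]) ` (bool_lists k) \<union> (\<lambda>ws. ws @ [False]) ` (bool_lists k)"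
      by (cases s) auto
  qed auto
  have "inj_on (\<lambda>ws. ws @ [s]) X" for s :: bool and X by (auto simp: inj_on_def)
  then show ?thesis unfolding eq
    by (subst sum.union_disjoint) (auto simp: finite_bool_lists sum.reindex sum.distrib)
qed

text \<open>The images of \<open>{p..q}\<close> under the \<open>2^k\<close> words of length \<open>k\<close> in \<open>A\<close> and \<open>B\<close> are pairwise
  disjoint, so most of them are short and, by concavity of \<open>x powr t\<close>, most words also have
  bounded distortion. A word with both properties has derivative at most \<open>1/2\<close> on \<open>{p..q}\<close>.\<close>
locale ping_pong =
  fixes a b p q t L :: real and A B A' B' :: "real \<Rightarrow> real"
  assumes K: "a \<le> p" "p < q" "q \<le> b"
    and Ai: "\<forall>x\<in>{a..b}. A x \<in> {a..b}" and Bi: "\<forall>x\<in>{a..b}. B x \<in> {a..b}"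
    and Ad: "\<forall>x\<in>{a..b}. (A has_real_derivative A' x) (at x within {a..b})"
    and Bd: "\<forall>x\<in>{a..b}. (B has_real_derivative B' x) (at x within {a..b})"
    and Apos: "\<forall>x\<in>{a..b}. A' x > 0" and Bpos: "\<forall>x\<in>{a..b}. B' x > 0"
    and Ah: "\<forall>x\<in>{a..b}. \<forall>y\<in>{a..b}. A' x \<le> A' y * exp (L * \<bar>x - y\<bar> powr t)"
    and Bh: "\<forall>x\<in>{a..b}. \<forall>y\<in>{a..b}. B' x \<le> B' y * exp (L * \<bar>x - y\<bar> powr t)"
    and L: "L \<ge> 0" and t: "0 < t" "t \<le> 1"
    and AK: "\<forall>x\<in>{p..q}. A x \<in> {p..q}" and BK: "\<forall>x\<in>{p..q}. B x \<in> {p..q}"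
    and AB: "A q < B p"
begin

definition gen :: "bool \<Rightarrow> real \<Rightarrow> real" where "gen s = (if s then A else B)"

definition gen' :: "bool \<Rightarrow> real \<Rightarrow> real" where "gen' s = (if s then A' else B')"

fun word :: "bool list \<Rightarrow> real \<Rightarrow> real" where
  "word [] = id"
| "word (s # ws) = gen s \<circ> word ws"

fun word_deriv :: "bool list \<Rightarrow> real \<Rightarrow> real" where
  "word_deriv [] x = 1"
| "word_deriv (s # ws) x = gen' s (word ws x) * word_deriv ws x"

abbreviation image_len :: "bool list \<Rightarrow> real" where
  "image_len ws \<equiv> word ws q - word ws p"

fun distortion_sum :: "bool list \<Rightarrow> real" where
  "distortion_sum [] = 0"
| "distortion_sum (s # ws) = distortion_sum ws + image_len ws powr t"

lemma K_subset: "{p..q} \<subseteq> {a..b}"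
  using K by auto

lemma gen_maps_into: "x \<in> {a..b} \<Longrightarrow> gen s x \<in> {a..b}"
  using Ai Bi by (auto simp: gen_def)

lemma gen_maps_K: "x \<in> {p..q} \<Longrightarrow> gen s x \<in> {p..q}"
  using AK BK by (auto simp: gen_def)

lemma gen_has_deriv: "x \<in> {a..b} \<Longrightarrow> (gen s has_real_derivative gen' s x) (at x within {a..b})"
  using Ad Bd by (auto simp: gen_def gen'_def)

lemma gen'_pos: "x \<in> {a..b} \<Longrightarrow> gen' s x > 0"
  using Apos Bpos by (auto simp: gen'_def)

lemma gen'_hoelder:
  "x \<in> {a..b} \<Longrightarrow> y \<in> {a..b} \<Longrightarrow> gen' s x \<le> gen' s y * exp (L * \<bar>x - y\<bar> powr t)"
  using Ah Bh by (auto simp: gen'_def)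

lemma gen_strict_mono: "strict_mono_on {a..b} (gen s)"
  using has_real_derivative_pos_imp_strict_mono_on gen_has_deriv gen'_pos by blast

lemma word_maps_into: "x \<in> {a..b} \<Longrightarrow> word ws x \<in> {a..b}"
  by (induction ws) (simp_all add: gen_maps_into del: atLeastAtMost_iff)

lemma word_maps_K: "x \<in> {p..q} \<Longrightarrow> word ws x \<in> {p..q}"
  by (induction ws) (simp_all add: gen_maps_K del: atLeastAtMost_iff)

lemma word_has_deriv:
  "x \<in> {a..b} \<Longrightarrow> (word ws has_real_derivative word_deriv ws x) (at x within {a..b})"
proof (induction ws)
  case Nil
  then show ?case by (simp add: id_def)
next
  case (Cons s ws)
  have "word ws ` {a..b} \<subseteq> {a..b}" using word_maps_into by auto
  then have "(gen s \<circ> word ws has_real_derivative gen' s (word ws x) * word_deriv ws x)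
      (at x within {a..b})"
    using DERIV_image_chain[OF DERIV_subset[OF gen_has_deriv] Cons.IH[OF Cons.prems]]
      word_maps_into[OF Cons.prems] by blast
  then show ?case by (simp add: o_def)
qed

lemma word_deriv_pos: "x \<in> {a..b} \<Longrightarrow> word_deriv ws x > 0"
proof (induction ws)
  case (Cons s ws)
  then show ?case using gen'_pos[OF word_maps_into[OF Cons.prems], of s] by simp
qed simp

lemma word_strict_mono: "strict_mono_on {a..b} (word ws)"
proof (induction ws)
  case (Cons s ws)
  show ?case
  proof (rule strict_mono_onI)
    fix x y assume "x \<in> {a..b}" "y \<in> {a..b}" "x < y"
    then show "word (s # ws) x < word (s # ws) y"
      using strict_mono_onD[OF Cons.IH] strict_mono_onD[OF gen_strict_mono] word_maps_into by simp
  qed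
qed (simp add: strict_mono_on_def)

lemma word_mono: "x \<in> {a..b} \<Longrightarrow> y \<in> {a..b} \<Longrightarrow> x \<le> y \<Longrightarrow> word ws x \<le> word ws y"
  by (rule strict_mono_on_leD[OF word_strict_mono])

lemma word_snoc: "word (ws @ [s]) = word ws \<circ> gen s"
  by (induction ws) auto

lemma image_len_nonneg: "image_len ws \<ge> 0"
  using word_mono[of p q ws] K by auto

lemma distortion_sum_nonneg: "distortion_sum ws \<ge> 0"
  by (induction ws) auto

lemma word_deriv_distortion:
  assumes x: "x \<in> {p..q}" and y: "y \<in> {p..q}"
  shows "word_deriv ws x \<le> word_deriv ws y * exp (L * distortion_sum ws)"
proof (induction ws)
  case (Cons s ws)
  have I: "word ws x \<in> {a..b}" "word ws y \<in> {a..b}" using word_maps_into x y K_subset by auto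
  have "\<bar>word ws x - word ws y\<bar> \<le> image_len ws"
    using word_mono[of p _ ws] word_mono[of _ q ws] x y K by (smt (verit) atLeastAtMost_iff)
  then have len: "exp (L * \<bar>word ws x - word ws y\<bar> powr t) \<le> exp (L * image_len ws powr t)"
    using t L by (simp add: mult_left_mono powr_mono2)
  have "word_deriv (s # ws) x = gen' s (word ws x) * word_deriv ws x" by simp
  also have "\<dots> \<le> (gen' s (word ws y) * exp (L * \<bar>word ws x - word ws y\<bar> powr t))
      * (word_deriv ws y * exp (L * distortion_sum ws))"
    using gen'_hoelder[OF I] Cons.IH gen'_pos[OF I(1)] gen'_pos[OF I(2)] word_deriv_pos x K_subset
    by (intro mult_mono) (auto simp: less_imp_le)
  also have "\<dots> \<le> (gen' s (word ws y) * exp (L * image_len ws powr t))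
      * (word_deriv ws y * exp (L * distortion_sum ws))"
    using len gen'_pos[OF I(2)] word_deriv_pos y K_subset
    by (intro mult_right_mono mult_left_mono) (auto simp: less_imp_le)
  also have "\<dots> = word_deriv (s # ws) y * exp (L * distortion_sum (s # ws))"
    by (simp add: algebra_simps exp_add[symmetric])
  finally show ?case .
qed simp

lemma sum_image_len_le: "(\<Sum>ws\<in>bool_lists k. image_len ws) \<le> q - p"
proof (induction k)
  case 0
  have "bool_lists 0 = {[]}" by auto
  then show ?case by simp
next
  case (Suc k)
  have step: "image_len (ws @ [True]) + image_len (ws @ [False]) \<le> image_len ws" for ws
  proof -
    have I: "p \<in> {a..b}" "q \<in> {a..b}" and K': "A p \<in> {p..q}" "B q \<in> {p..q}" "A q \<in> {p..q}"
      "B p \<in> {p..q}" using AK BK K by auto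
    then have "word ws p \<le> word ws (A p)" "word ws (A q) \<le> word ws (B p)"
      "word ws (B q) \<le> word ws q"
      using word_mono[of _ _ ws] AB K_subset by (auto simp: subset_iff)
    then show ?thesis by (simp add: word_snoc gen_def)
  qed
  have "(\<Sum>ws\<in>bool_lists (Suc k). image_len ws)
      = (\<Sum>ws\<in>bool_lists k. image_len (ws @ [True]) + image_len (ws @ [False]))"
    by (rule sum_bool_lists_Suc_snoc)
  also have "\<dots> \<le> (\<Sum>ws\<in>bool_lists k. image_len ws)" by (rule sum_mono) (rule step)
  also have "\<dots> \<le> q - p" by (rule Suc.IH)
  finally show ?case .
qed

definition "shrink = inverse (2 powr t)"

definition "distortion_sum_bound = 2 * (q - p) powr t / (1 - shrink)"

lemma shrink: "0 < shrink" "shrink < 1"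
proof -
  have "2 powr 0 < 2 powr t" using t by (intro powr_less_mono) auto
  then show "0 < shrink" "shrink < 1" by (auto simp: shrink_def inverse_less_1_iff)
qed

lemma distortion_sum_bound_pos: "distortion_sum_bound > 0"
  using K shrink by (simp add: distortion_sum_bound_def)

lemma sum_image_len_powr_le:
  "(\<Sum>ws\<in>bool_lists k. image_len ws powr t) \<le> 2 * 2^k * ((q - p) powr t * shrink^k)"
proof -
  define \<delta> where "\<delta> = (q - p) / 2^k"
  have \<delta>: "\<delta> > 0" using K by (simp add: \<delta>_def)
  have "(\<Sum>ws\<in>bool_lists k. image_len ws powr t)
      \<le> (\<Sum>ws\<in>bool_lists k. \<delta> powr t * (image_len ws / \<delta>) + \<delta> powr t)"
    by (rule sum_mono) (rule powr_le_linear_plus_const[OF image_len_nonneg \<delta> t])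
  also have "\<dots> = \<delta> powr t / \<delta> * (\<Sum>ws\<in>bool_lists k. image_len ws) + 2^k * \<delta> powr t"
    by (simp add: sum.distrib sum_distrib_left sum_divide_distrib card_bool_lists)
  also have "\<dots> \<le> \<delta> powr t / \<delta> * (q - p) + 2^k * \<delta> powr t"
    using sum_image_len_le \<delta> by (intro add_right_mono mult_left_mono) auto
  also have "\<dots> = 2 * 2^k * \<delta> powr t" using \<delta> by (simp add: \<delta>_def)
  also have "\<delta> powr t = (q - p) powr t / (2^k) powr t" using K by (simp add: \<delta>_def powr_divide)
  also have "\<dots> = (q - p) powr t * shrink^k"
    by (simp add: powr_power_base shrink_def power_inverse divide_inverse)
  finally show ?thesis .
qed

lemma sum_distortion_sum_le:
  "(\<Sum>ws\<in>bool_lists k. distortion_sum ws) \<le> 2^k * distortion_sum_bound * (1 - shrink^k)"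
proof (induction k)
  case 0
  have "bool_lists 0 = {[]}" by auto
  then show ?case by simp
next
  case (Suc k)
  have "(\<Sum>ws\<in>bool_lists (Suc k). distortion_sum ws)
      = (\<Sum>ws\<in>bool_lists k. distortion_sum (True # ws) + distortion_sum (False # ws))"
    by (rule sum_bool_lists_Suc_Cons)
  also have "\<dots> = 2 * (\<Sum>ws\<in>bool_lists k. distortion_sum ws)
      + 2 * (\<Sum>ws\<in>bool_lists k. image_len ws powr t)"
    by (simp add: sum.distrib sum_distrib_left)
  also have "\<dots> \<le> 2 * (2^k * distortion_sum_bound * (1 - shrink^k))
      + 2 * (2 * 2^k * ((q - p) powr t * shrink^k))"
    using Suc.IH sum_image_len_powr_le[of k] by linarith
  also have "\<dots> = 2^Suc k * distortion_sum_bound * (1 - shrink^Suc k)"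
    using shrink by (simp add: distortion_sum_bound_def field_simps)
  finally show ?case .
qed

lemma short_word_with_bounded_distortion:
  assumes e: "\<epsilon> > 0"
  shows "\<exists>ws. image_len ws \<le> \<epsilon> \<and> distortion_sum ws \<le> 2 * distortion_sum_bound"
proof (rule ccontr)
  assume none: "\<not> ?thesis"
  obtain k where k: "2 * (q - p) / \<epsilon> < 2^k" using real_arch_pow[of 2 "2 * (q - p) / \<epsilon>"] by auto
  define W where "W = bool_lists k"
  define B1 where "B1 = {ws\<in>W. image_len ws > \<epsilon>}"
  define B2 where "B2 = {ws\<in>W. distortion_sum ws > 2 * distortion_sum_bound}"
  have fW: "finite W" by (simp add: W_def finite_bool_lists)
  have "W \<subseteq> B1 \<union> B2" using none by (auto simp: B1_def B2_def not_le)
  then have "card W \<le> card (B1 \<union> B2)" using fW by (intro card_mono) (auto simp: B1_def B2_def)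
  also have "\<dots> \<le> card B1 + card B2" by (rule card_Un_le)
  finally have card: "(2::real)^k \<le> real (card B1) + real (card B2)"
    by (simp add: W_def card_bool_lists flip: of_nat_add)
  have "real (card B1) * \<epsilon> \<le> (\<Sum>ws\<in>B1. image_len ws)"
    by (rule sum_bounded_below) (auto simp: B1_def less_imp_le)
  also have "\<dots> \<le> (\<Sum>ws\<in>W. image_len ws)"
    by (rule sum_mono2[OF fW]) (use image_len_nonneg in \<open>auto simp: B1_def\<close>)
  also have "\<dots> \<le> q - p" unfolding W_def by (rule sum_image_len_le)
  also have "\<dots> < 2^k * \<epsilon> / 2" using k e by (simp add: field_simps)
  finally have B1: "real (card B1) * 2 < 2^k" using e by (simp add: field_simps)
  have "real (card B2) * (2 * distortion_sum_bound) \<le> (\<Sum>ws\<in>B2. distortion_sum ws)"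
    by (rule sum_bounded_below) (auto simp: B2_def less_imp_le)
  also have "\<dots> \<le> (\<Sum>ws\<in>W. distortion_sum ws)"
    by (rule sum_mono2[OF fW]) (auto simp: B2_def distortion_sum_nonneg)
  also have "\<dots> \<le> 2^k * distortion_sum_bound * (1 - shrink^k)" unfolding W_def
    by (rule sum_distortion_sum_le)
  also have "\<dots> < 2^k * distortion_sum_bound" using distortion_sum_bound_pos shrink by simp
  finally have "real (card B2) * 2 < 2^k" using distortion_sum_bound_pos by (simp add: field_simps)
  with B1 card show False by linarith
qed

lemma contracting_word: "\<exists>ws. \<forall>x\<in>{p..q}. word_deriv ws x \<le> 1/2"
proof -
  define \<epsilon> where "\<epsilon> = (q - p) / (2 * exp (L * (2 * distortion_sum_bound)))"
  have e: "\<epsilon> > 0" using K by (simp add: \<epsilon>_def)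
  obtain ws where ws: "image_len ws \<le> \<epsilon>" "distortion_sum ws \<le> 2 * distortion_sum_bound"
    using short_word_with_bounded_distortion[OF e] by blast
  obtain \<xi> where \<xi>: "\<xi> \<in> {p..q}" "image_len ws = word_deriv ws \<xi> * (q - p)"
    using mvt_within[of "{a..b}" "word ws" "word_deriv ws" p q] word_has_deriv K_subset K by auto
  have D\<xi>: "word_deriv ws \<xi> \<le> \<epsilon> / (q - p)" using \<xi>(2) ws(1) K by (simp add: field_simps)
  show ?thesis
  proof (intro exI ballI)
    fix x assume x: "x \<in> {p..q}"
    have "word_deriv ws x \<le> word_deriv ws \<xi> * exp (L * distortion_sum ws)"
      by (rule word_deriv_distortion[OF x \<xi>(1)])
    also have "\<dots> \<le> word_deriv ws \<xi> * exp (L * (2 * distortion_sum_bound))"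
      using ws(2) L word_deriv_pos[of \<xi> ws] \<xi>(1) K_subset
      by (intro mult_left_mono) (auto intro: mult_left_mono)
    also have "\<dots> \<le> \<epsilon> / (q - p) * exp (L * (2 * distortion_sum_bound))"
      using D\<xi> by (intro mult_right_mono) auto
    also have "\<dots> = 1/2" using K by (simp add: \<epsilon>_def)
    finally show "word_deriv ws x \<le> 1/2" .
  qed
qed

end

section \<open>Groups of diffeomorphisms of a compact interval\<close>

locale Icc_diff_group =
  fixes a b \<tau> :: real and G :: "(real \<Rightarrow> real) set"
  assumes ab: "a < b" and tau: "\<tau> > 0" and subgroup: "diff_subgroup {a..b} \<tau> G"
begin

lemma bij_Icc: "h \<in> G \<Longrightarrow> bij_betw h {a..b} {a..b}"
  using subgroup by (auto simp: diff_subgroup_def Diff_1_tau_def)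

lemma maps_Icc: "h \<in> G \<Longrightarrow> x \<in> {a..b} \<Longrightarrow> h x \<in> {a..b}"
  using bij_Icc bij_betwE by blast

lemma log_hoelder_deriv:
  assumes "h \<in> G"
  obtains h' L where "\<forall>x\<in>{a..b}. (h has_real_derivative h' x) (at x within {a..b})"
    "\<forall>x\<in>{a..b}. h' x > 0" "continuous_on {a..b} h'"
    "\<And>L'. L \<le> L' \<Longrightarrow> \<forall>x\<in>{a..b}. \<forall>y\<in>{a..b}. h' x \<le> h' y * exp (L' * \<bar>x - y\<bar> powr (min \<tau> 1))"
proof -
  have "h \<in> Diff_1_tau {a..b} \<tau>" using subgroup assms by (auto simp: diff_subgroup_def)
  then obtain h' L where h': "\<forall>x\<in>{a..b}. (h has_real_derivative h' x) (at x within {a..b})"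
    "\<forall>x\<in>{a..b}. h' x > 0" "continuous_on {a..b} h'" "L \<ge> 0"
    "\<forall>x\<in>{a..b}. \<forall>y\<in>{a..b}. h' x \<le> h' y * exp (L * \<bar>x - y\<bar> powr (min \<tau> 1))"
    using Diff_1_tau_log_hoelder[OF ab tau] by metis
  have "h' x \<le> h' y * exp (L' * \<bar>x - y\<bar> powr (min \<tau> 1))"
    if "L \<le> L'" "x \<in> {a..b}" "y \<in> {a..b}" for L' x y
  proof -
    have "exp (L * \<bar>x - y\<bar> powr (min \<tau> 1)) \<le> exp (L' * \<bar>x - y\<bar> powr (min \<tau> 1))"
      using that(1) by (simp add: mult_right_mono)
    then show ?thesis using h'(2,5) that(2,3) by (meson mult_left_mono less_imp_le order_trans)
  qed
  then show ?thesis using that h'(1-3) by blast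
qed

lemma strict_mono_Icc: "h \<in> G \<Longrightarrow> strict_mono_on {a..b} h"
  by (metis log_hoelder_deriv has_real_derivative_pos_imp_strict_mono_on)

lemma mono_Icc: "h \<in> G \<Longrightarrow> mono_on {a..b} h"
  by (rule strict_mono_on_imp_mono_on[OF strict_mono_Icc])

lemma continuous_Icc: "h \<in> G \<Longrightarrow> continuous_on {a..b} h"
  by (metis log_hoelder_deriv DERIV_continuous continuous_on_eq_continuous_within)

lemma fixes_endpoints:
  assumes "h \<in> G"
  shows "h a = a" "h b = b"
proof -
  have I: "a \<in> {a..b}" "b \<in> {a..b}" "h ` {a..b} = {a..b}"
    using ab bij_Icc[OF assms] by (auto simp: bij_betw_def)
  then obtain y z where "y \<in> {a..b}" "h y = a" "z \<in> {a..b}" "h z = b" by (metis imageE)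
  then show "h a = a" "h b = b"
    using mono_onD[OF mono_Icc[OF assms]] maps_Icc[OF assms] I
      by (metis atLeastAtMost_iff order_antisym)+
qed

lemma comp_in: "h \<in> G \<Longrightarrow> k \<in> G \<Longrightarrow> \<exists>j\<in>G. \<forall>x\<in>{a..b}. j x = h (k x)"
  using subgroup by (auto simp: diff_subgroup_def)

lemma funpow_in: "h \<in> G \<Longrightarrow> \<exists>k\<in>G. \<forall>x\<in>{a..b}. k x = (h^^n) x"
proof (induction n)
  case 0
  then show ?case using subgroup by (simp add: diff_subgroup_def)
next
  case (Suc n)
  then obtain k where "k \<in> G" "\<forall>x\<in>{a..b}. k x = (h^^n) x" by blast
  then show ?case using comp_in[OF Suc.prems \<open>k \<in> G\<close>] by auto
qed

lemma inv_into_in: "h \<in> G \<Longrightarrow> \<exists>k\<in>G. \<forall>x\<in>{a..b}. k x = inv_into {a..b} h x"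
  using subgroup by (auto simp: diff_subgroup_def)

lemma inv_into_cancel:
  assumes "h \<in> G" "x \<in> {a..b}"
  shows "h (inv_into {a..b} h x) = x" "inv_into {a..b} h (h x) = x" "inv_into {a..b} h x \<in> {a..b}"
proof -
  have "inj_on h {a..b}" "h ` {a..b} = {a..b}"
    using bij_Icc[OF assms(1)] by (auto simp: bij_betw_def)
  then show "h (inv_into {a..b} h x) = x" "inv_into {a..b} h (h x) = x"
    "inv_into {a..b} h x \<in> {a..b}"
    using assms(2) by (metis f_inv_into_f inv_into_f_f inv_into_into)+
qed

lemma inverse_in:
  assumes "h \<in> G"
  obtains k where "k \<in> G" "\<And>x. x \<in> {a..b} \<Longrightarrow> k (h x) = x" "\<And>x. x \<in> {a..b} \<Longrightarrow> h (k x) = x"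
  using inv_into_in[OF assms] inv_into_cancel[OF assms] maps_Icc[OF assms] by metis

lemma ipow_in:
  assumes "h \<in> G"
  shows "\<exists>k\<in>G. \<forall>x\<in>{a..b}. k x = ipow {a..b} h n x"
proof (cases "n \<ge> 0")
  case True
  then show ?thesis using funpow_in[OF assms] by (simp add: ipow_def)
next
  case False
  obtain k where k: "k \<in> G" "\<forall>x\<in>{a..b}. k x = inv_into {a..b} h x"
    using inv_into_in[OF assms] by blast
  obtain j where "j \<in> G" "\<forall>x\<in>{a..b}. j x = (k^^nat (- n)) x" using funpow_in[OF k(1)] by blast
  moreover have "(k^^nat (- n)) x = (inv_into {a..b} h ^^ nat (- n)) x" if "x \<in> {a..b}" for x
    using funpow_cong_on[OF k(2) _ that] inv_into_cancel(3)[OF assms] by blast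
  ultimately show ?thesis using False by (auto simp: ipow_def)
qed

lemma ipow_maps_into: "h \<in> G \<Longrightarrow> x \<in> {a..b} \<Longrightarrow> ipow {a..b} h n x \<in> {a..b}"
  using ipow_in maps_Icc by metis

lemma ipow_mono:
  "h \<in> G \<Longrightarrow> x \<in> {a..b} \<Longrightarrow> y \<in> {a..b} \<Longrightarrow> x \<le> y \<Longrightarrow> ipow {a..b} h n x \<le> ipow {a..b} h n y"
  using ipow_in mono_Icc mono_onD by metis

lemma ipow_fixed:
  assumes "h \<in> G" "r \<in> {a..b}" "h r = r"
  shows "ipow {a..b} h n r = r"
proof -
  have "inv_into {a..b} h r = r" using inv_into_cancel(2)[OF assms(1,2)] assms(3) by simp
  then show ?thesis using assms(3) by (simp add: ipow_def funpow_fixed_point)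
qed

lemma ipow_succ:
  assumes h: "h \<in> G" and x: "x \<in> {a..b}"
  shows "h (ipow {a..b} h n x) = ipow {a..b} h (n + 1) x"
proof (cases "n \<ge> 0")
  case True
  then have "nat (n + 1) = Suc (nat n)" by simp
  then show ?thesis using True by (simp add: ipow_def)
next
  case False
  define m where "m = nat (- n - 1)"
  have nm: "nat (- n) = Suc m" using False by (simp add: m_def)
  have "(inv_into {a..b} h ^^ m) x \<in> {a..b}"
    using funpow_maps_into[of "{a..b}" "inv_into {a..b} h"] inv_into_cancel(3)[OF h] x by blast
  then have "h (ipow {a..b} h n x) = (inv_into {a..b} h ^^ m) x"
    using False nm inv_into_cancel(1)[OF h] by (simp add: ipow_def)
  also have "\<dots> = ipow {a..b} h (n + 1) x"
    using False by (cases "n = -1") (simp_all add: ipow_def m_def nat_diff_distrib)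
  finally show ?thesis .
qed

lemma orbit_image_eq:
  assumes h: "h \<in> G" and x: "x \<in> {a..b}"
  shows "h ` range (\<lambda>n. ipow {a..b} h n x) = range (\<lambda>n. ipow {a..b} h n x)"
proof
  show "h ` range (\<lambda>n. ipow {a..b} h n x) \<subseteq> range (\<lambda>n. ipow {a..b} h n x)"
    using ipow_succ[OF h x] by auto
  show "range (\<lambda>n. ipow {a..b} h n x) \<subseteq> h ` range (\<lambda>n. ipow {a..b} h n x)"
  proof
    fix y assume "y \<in> range (\<lambda>n. ipow {a..b} h n x)"
    then obtain n where "y = h (ipow {a..b} h (n - 1) x)"
      using ipow_succ[OF h x, of "_ - 1"] by force
    then show "y \<in> h ` range (\<lambda>n. ipow {a..b} h n x)" by blast
  qed
qed

lemma fixed_point_left_of_crossing: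
  assumes g: "g \<in> G" and uv: "u \<in> {a..b}" "v \<in> {a..b}" "u < w" "w < v"
    and orbit: "\<forall>n. ipow {a..b} g n u < w" and N: "ipow {a..b} g N v < w"
  obtains P where "u \<le> P" "P < w" "g P = P" "\<And>x. P < x \<Longrightarrow> x \<le> v \<Longrightarrow> g x \<noteq> x"
proof -
  let ?O = "range (\<lambda>n. ipow {a..b} g n u)"
  have O: "?O \<subseteq> {a..b}" "?O \<noteq> {}" using ipow_maps_into[OF g uv(1)] by auto
  have fixed: "g (Sup ?O) = Sup ?O"
    by (rule Sup_Inf_invariant_set_fixed(1)[OF continuous_Icc[OF g] mono_Icc[OF g] O
      orbit_image_eq[OF g uv(1)]])
  have "u \<in> ?O" using range_eqI[of u "\<lambda>n. ipow {a..b} g n u" 0] by (simp add: ipow_def)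
  moreover have "bdd_above ?O" using orbit by (auto intro!: bdd_aboveI[of _ w] less_imp_le)
  ultimately have u_le: "u \<le> Sup ?O" by (rule cSup_upper)
  have "Sup ?O \<le> w" using orbit by (intro cSup_least[OF O(2)]) (auto intro: less_imp_le)
  then have "Sup ?O \<in> {u..v}" using u_le uv by auto
  moreover have "continuous_on {u..v} g"
    using continuous_on_subset[OF continuous_Icc[OF g]] uv by auto
  ultimately obtain P where P: "Sup ?O \<le> P" "P \<le> v" "g P = P" "\<And>y. P < y \<Longrightarrow> y \<le> v \<Longrightarrow> g y \<noteq> y"
    using greatest_fixed_point_above fixed by blast
  have "P < w"
  proof (rule ccontr)
    assume "\<not> P < w"
    have "P \<in> {a..b}" using P uv u_le by auto
    then have "P \<le> ipow {a..b} g N v"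
      using ipow_mono[OF g _ uv(2) P(2)] ipow_fixed[OF g _ P(3)] by metis
    then show False using N \<open>\<not> P < w\<close> by simp
  qed
  then show ?thesis by (rule that[OF order_trans[OF u_le P(1)] _ P(3,4)])
qed

lemma fixed_point_right_of_crossing:
  assumes f: "f \<in> G" and uv: "u \<in> {a..b}" "v \<in> {a..b}" "u < w" "w < v"
    and orbit: "\<forall>n. w < ipow {a..b} f n v" and N: "w < ipow {a..b} f N u"
  obtains Q where "w < Q" "Q \<le> v" "f Q = Q" "\<And>x. u \<le> x \<Longrightarrow> x < Q \<Longrightarrow> f x \<noteq> x"
proof -
  let ?O = "range (\<lambda>n. ipow {a..b} f n v)"
  have O: "?O \<subseteq> {a..b}" "?O \<noteq> {}" using ipow_maps_into[OF f uv(2)] by auto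
  have fixed: "f (Inf ?O) = Inf ?O"
    by (rule Sup_Inf_invariant_set_fixed(2)[OF continuous_Icc[OF f] mono_Icc[OF f] O
      orbit_image_eq[OF f uv(2)]])
  have "v \<in> ?O" using range_eqI[of v "\<lambda>n. ipow {a..b} f n v" 0] by (simp add: ipow_def)
  moreover have "bdd_below ?O" using orbit by (auto intro!: bdd_belowI[of _ w] less_imp_le)
  ultimately have le_v: "Inf ?O \<le> v" by (rule cInf_lower)
  have "w \<le> Inf ?O" using orbit by (intro cInf_greatest[OF O(2)]) (auto intro: less_imp_le)
  then have "Inf ?O \<in> {u..v}" using le_v uv by auto
  moreover have "continuous_on {u..v} f"
    using continuous_on_subset[OF continuous_Icc[OF f]] uv by auto
  ultimately obtain Q where Q: "u \<le> Q" "Q \<le> Inf ?O" "f Q = Q" "\<And>y. u \<le> y \<Longrightarrow> y < Q \<Longrightarrow> f y \<noteq> y"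
    using least_fixed_point_below fixed by blast
  have "w < Q"
  proof (rule ccontr)
    assume "\<not> w < Q"
    have "Q \<in> {a..b}" using Q uv le_v by auto
    then have "ipow {a..b} f N u \<le> Q"
      using ipow_mono[OF f uv(1) _ Q(1)] ipow_fixed[OF f _ Q(3)] by metis
    then show False using N \<open>\<not> w < Q\<close> by simp
  qed
  then show ?thesis by (rule that[OF _ order_trans[OF Q(2) le_v] Q(3,4)])
qed

lemma fixed_point_free_left_mover:
  assumes h: "h \<in> G" and S: "S \<subseteq> {a..b}" "connected S" "\<forall>x\<in>S. h x \<noteq> x"
  obtains \<sigma> where "\<sigma> \<in> G" "\<forall>x\<in>S. \<sigma> x < x" "\<And>y. y \<in> {a..b} \<Longrightarrow> h y = y \<Longrightarrow> \<sigma> y = y"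
proof (cases "\<exists>x\<in>S. h x < x")
  case True
  then have "\<forall>y\<in>S. h y < y"
    using fixed_point_free_sign[OF continuous_on_subset[OF continuous_Icc[OF h] S(1)] S(2,3)]
      by blast
  then show ?thesis using that h by blast
next
  case False
  then have above: "\<forall>x\<in>S. x < h x" using S(3) by force
  obtain k where k: "k \<in> G" "\<And>x. x \<in> {a..b} \<Longrightarrow> k (h x) = x" "\<And>x. x \<in> {a..b} \<Longrightarrow> h (k x) = x"
    using inverse_in[OF h] by blast
  have "k x < x" if x: "x \<in> S" for x
  proof (rule ccontr)
    assume "\<not> k x < x"
    then have "h x \<le> h (k x)" using mono_onD[OF mono_Icc[OF h]] maps_Icc[OF k(1)] S(1) x by auto
    then show False using above k(3) S(1) x by force
  qed
  moreover have "k y = y" if "y \<in> {a..b}" "h y = y" for y using k(2) that by metis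
  ultimately show ?thesis using that k(1) by blast
qed

lemma fixed_point_free_right_mover:
  assumes h: "h \<in> G" and S: "S \<subseteq> {a..b}" "connected S" "\<forall>x\<in>S. h x \<noteq> x"
  obtains \<sigma> where "\<sigma> \<in> G" "\<forall>x\<in>S. x < \<sigma> x" "\<And>y. y \<in> {a..b} \<Longrightarrow> h y = y \<Longrightarrow> \<sigma> y = y"
proof -
  obtain \<rho> where \<rho>: "\<rho> \<in> G" "\<forall>x\<in>S. \<rho> x < x" "\<And>y. y \<in> {a..b} \<Longrightarrow> h y = y \<Longrightarrow> \<rho> y = y"
    using fixed_point_free_left_mover[OF assms] by blast
  obtain k where k: "k \<in> G" "\<And>x. x \<in> {a..b} \<Longrightarrow> k (\<rho> x) = x" "\<And>x. x \<in> {a..b} \<Longrightarrow> \<rho> (k x) = x"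
    using inverse_in[OF \<rho>(1)] by blast
  have "x < k x" if x: "x \<in> S" for x
  proof (rule ccontr)
    assume "\<not> x < k x"
    then have "\<rho> (k x) \<le> \<rho> x" using mono_onD[OF mono_Icc[OF \<rho>(1)]] maps_Icc[OF k(1)] S(1) x by auto
    then show False using \<rho>(2) k(3) S(1) x by force
  qed
  moreover have "k y = y" if "y \<in> {a..b}" "h y = y" for y using k(2) \<rho>(3) that by metis
  ultimately show ?thesis using that k(1) by blast
qed

lemma contraction_towards_left_fixed_point:
  assumes h: "h \<in> G" and PQ: "a \<le> P" "P < Q" "Q \<le> b" and fixed: "h P = P"
    and free: "\<And>x. P < x \<Longrightarrow> x \<le> Q \<Longrightarrow> h x \<noteq> x" and \<epsilon>: "\<epsilon> > 0"
  obtains k where "k \<in> G" "k P = P" "k Q < P + \<epsilon>"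
proof -
  have sub: "{P..Q} \<subseteq> {a..b}" "{P<..Q} \<subseteq> {a..b}" and "\<forall>x\<in>{P<..Q}. h x \<noteq> x"
    using PQ free by auto
  then obtain \<sigma> where \<sigma>: "\<sigma> \<in> G" "\<forall>x\<in>{P<..Q}. \<sigma> x < x"
    and \<sigma>_fixed: "\<And>y. y \<in> {a..b} \<Longrightarrow> h y = y \<Longrightarrow> \<sigma> y = y"
    using fixed_point_free_left_mover[OF h sub(2) connected_Ioc] by blast
  have "\<sigma> P = P" using \<sigma>_fixed PQ fixed by simp
  have "(\<lambda>n. (\<sigma>^^n) Q) \<longlonglongrightarrow> P"
    by (rule funpow_tendsto_fixed_point_left[OF
      continuous_on_subset[OF continuous_Icc[OF \<sigma>(1)] sub(1)]
      mono_on_subset[OF mono_Icc[OF \<sigma>(1)] sub(1)]]) (use PQ \<sigma> \<open>\<sigma> P = P\<close> in auto)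
  then have "\<forall>\<^sub>F n in sequentially. (\<sigma>^^n) Q < P + \<epsilon>"
    by (rule order_tendstoD(2)) (simp add: \<epsilon>)
  then obtain n where n: "(\<sigma>^^n) Q < P + \<epsilon>" unfolding eventually_sequentially by blast
  obtain k where "k \<in> G" "\<forall>x\<in>{a..b}. k x = (\<sigma>^^n) x" using funpow_in[OF \<sigma>(1)] by blast
  then show ?thesis using that n PQ funpow_fixed_point[of \<sigma> P n] \<open>\<sigma> P = P\<close> by simp
qed

lemma contraction_towards_right_fixed_point:
  assumes h: "h \<in> G" and PQ: "a \<le> P" "P < Q" "Q \<le> b" and fixed: "h Q = Q"
    and free: "\<And>x. P \<le> x \<Longrightarrow> x < Q \<Longrightarrow> h x \<noteq> x" and \<epsilon>: "\<epsilon> > 0"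
  obtains k where "k \<in> G" "k Q = Q" "Q - \<epsilon> < k P"
proof -
  have sub: "{P..Q} \<subseteq> {a..b}" "{P..<Q} \<subseteq> {a..b}" and "\<forall>x\<in>{P..<Q}. h x \<noteq> x"
    using PQ free by auto
  then obtain \<sigma> where \<sigma>: "\<sigma> \<in> G" "\<forall>x\<in>{P..<Q}. x < \<sigma> x"
    and \<sigma>_fixed: "\<And>y. y \<in> {a..b} \<Longrightarrow> h y = y \<Longrightarrow> \<sigma> y = y"
    using fixed_point_free_right_mover[OF h sub(2) connected_Ico] by blast
  have "\<sigma> Q = Q" using \<sigma>_fixed PQ fixed by simp
  have "(\<lambda>n. (\<sigma>^^n) P) \<longlonglongrightarrow> Q"
    by (rule funpow_tendsto_fixed_point_right[OF
      continuous_on_subset[OF continuous_Icc[OF \<sigma>(1)] sub(1)]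
      mono_on_subset[OF mono_Icc[OF \<sigma>(1)] sub(1)]]) (use PQ \<sigma> \<open>\<sigma> Q = Q\<close> in auto)
  then have "\<forall>\<^sub>F n in sequentially. Q - \<epsilon> < (\<sigma>^^n) P"
    by (rule order_tendstoD(1)) (simp add: \<epsilon>)
  then obtain n where n: "Q - \<epsilon> < (\<sigma>^^n) P" unfolding eventually_sequentially by blast
  obtain k where "k \<in> G" "\<forall>x\<in>{a..b}. k x = (\<sigma>^^n) x" using funpow_in[OF \<sigma>(1)] by blast
  then show ?thesis using that n PQ funpow_fixed_point[of \<sigma> Q n] \<open>\<sigma> Q = Q\<close> by simp
qed

lemma ping_pong_contraction:
  assumes PQ: "a \<le> P" "P < Q" "Q \<le> b"
    and A: "A \<in> G" "\<forall>x\<in>{P..Q}. A x \<in> {P..Q}" and B: "B \<in> G" "\<forall>x\<in>{P..Q}. B x \<in> {P..Q}"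
    and AB: "A Q < B P"
  obtains W where "W \<in> G" "\<forall>x\<in>{P..Q}. W x \<in> {P..Q}"
    "\<And>W'. \<forall>x\<in>{a..b}. (W has_real_derivative W' x) (at x within {a..b})
      \<Longrightarrow> \<forall>x\<in>{P..Q}. W' x \<le> 1/2"
proof -
  obtain A' LA where A': "\<forall>x\<in>{a..b}. (A has_real_derivative A' x) (at x within {a..b})"
    "\<forall>x\<in>{a..b}. A' x > 0" "\<And>L'. LA \<le> L' \<Longrightarrow>
      \<forall>x\<in>{a..b}. \<forall>y\<in>{a..b}. A' x \<le> A' y * exp (L' * \<bar>x - y\<bar> powr (min \<tau> 1))"
    using log_hoelder_deriv[OF A(1)] by metis
  obtain B' LB where B': "\<forall>x\<in>{a..b}. (B has_real_derivative B' x) (at x within {a..b})"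
    "\<forall>x\<in>{a..b}. B' x > 0" "\<And>L'. LB \<le> L' \<Longrightarrow>
      \<forall>x\<in>{a..b}. \<forall>y\<in>{a..b}. B' x \<le> B' y * exp (L' * \<bar>x - y\<bar> powr (min \<tau> 1))"
    using log_hoelder_deriv[OF B(1)] by metis
  interpret pp: ping_pong a b P Q "min \<tau> 1" "max 0 (max LA LB)" A B A' B'
    using PQ A B AB A' B'(1,2) B'(3)[of "max 0 (max LA LB)"] maps_Icc tau by unfold_locales auto
  obtain ws where ws: "\<forall>x\<in>{P..Q}. pp.word_deriv ws x \<le> 1/2" using pp.contracting_word by blast
  have "\<exists>h\<in>G. \<forall>x\<in>{a..b}. h x = pp.word ws' x" for ws'
  proof (induction ws')
    case Nil
    then show ?case using subgroup by (simp add: diff_subgroup_def)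
  next
    case (Cons s ws')
    then obtain h where h: "h \<in> G" "\<forall>x\<in>{a..b}. h x = pp.word ws' x" by blast
    have "pp.gen s \<in> G" using A B by (simp add: pp.gen_def)
    then show ?case using comp_in[OF _ h(1)] h(2) by fastforce
  qed
  then obtain W where W: "W \<in> G" "\<forall>x\<in>{a..b}. W x = pp.word ws x" by blast
  show ?thesis
  proof (rule that[OF W(1)])
    show "\<forall>x\<in>{P..Q}. W x \<in> {P..Q}" using pp.word_maps_K W(2) PQ by auto
    fix W' assume W': "\<forall>x\<in>{a..b}. (W has_real_derivative W' x) (at x within {a..b})"
    have "W' x = pp.word_deriv ws x" if x: "x \<in> {a..b}" for x
    proof -
      have "(W has_real_derivative pp.word_deriv ws x) (at x within {a..b})"
        by (rule has_field_derivative_transform_within[OF pp.word_has_deriv[OF x] zero_less_one x])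
          (use W(2) in auto)
      then show ?thesis using has_real_derivative_unique_Icc[OF ab x] W' x by blast
    qed
    then show "\<forall>x\<in>{P..Q}. W' x \<le> 1/2" using ws PQ by auto
  qed
qed

lemma contraction_between_fixed_points:
  assumes f: "f \<in> G" and g: "g \<in> G" and PQ: "a \<le> P" "P < Q" "Q \<le> b"
    and g_fixed: "g P = P" "\<And>x. P < x \<Longrightarrow> x \<le> Q \<Longrightarrow> g x \<noteq> x"
    and f_fixed: "f Q = Q" "\<And>x. P \<le> x \<Longrightarrow> x < Q \<Longrightarrow> f x \<noteq> x"
  obtains W where "W \<in> G" "\<forall>x\<in>{P..Q}. W x \<in> {P..Q}"
    "\<And>W'. \<forall>x\<in>{a..b}. (W has_real_derivative W' x) (at x within {a..b})
      \<Longrightarrow> \<forall>x\<in>{P..Q}. W' x \<le> 1/2"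
proof -
  define \<epsilon> where "\<epsilon> = (Q - P) / 3"
  have \<epsilon>: "\<epsilon> > 0" "P + \<epsilon> < Q - \<epsilon>" using PQ by (auto simp: \<epsilon>_def field_simps)
  obtain A where A: "A \<in> G" "A P = P" "A Q < P + \<epsilon>"
    using contraction_towards_left_fixed_point[OF g PQ g_fixed \<epsilon>(1)] by blast
  obtain B where B: "B \<in> G" "B Q = Q" "Q - \<epsilon> < B P"
    using contraction_towards_right_fixed_point[OF f PQ f_fixed \<epsilon>(1)] by blast
  have maps_PQ: "\<forall>x\<in>{P..Q}. h x \<in> {P..Q}" if h: "h \<in> G" "P \<le> h P" "h Q \<le> Q" for h
  proof
    fix x assume "x \<in> {P..Q}"
    then have "h P \<le> h x" "h x \<le> h Q" using mono_onD[OF mono_Icc[OF h(1)]] PQ by auto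
    then show "h x \<in> {P..Q}" using h by auto
  qed
  have "A Q < B P" using A(3) B(3) \<epsilon>(2) by simp
  then show ?thesis
    using ping_pong_contraction[OF PQ A(1) maps_PQ[OF A(1)] B(1) maps_PQ[OF B(1)]] that A B \<epsilon>
    by auto
qed

lemma commuting_fixes_component_ends:
  assumes comm: "\<forall>h\<in>G. \<forall>x\<in>{a..b}. c (h x) = h (c x)"
    and y: "a \<le> \<alpha>" "\<alpha> < y" "y < \<beta>" "\<beta> \<le> b" "c \<alpha> = \<alpha>" "c \<beta> = \<beta>"
    and free: "\<And>x. \<alpha> < x \<Longrightarrow> x < \<beta> \<Longrightarrow> c x \<noteq> x"
    and h: "h \<in> G" "h y = y"
  shows "h \<alpha> = \<alpha>" "h \<beta> = \<beta>"
proof -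
  have I: "\<alpha> \<in> {a..b}" "\<beta> \<in> {a..b}" "y \<in> {a..b}" using y by auto
  have bounds: "k \<alpha> \<le> \<alpha> \<and> \<beta> \<le> k \<beta>" if k: "k \<in> G" "k y = y" for k
  proof -
    have "c (k \<alpha>) = k \<alpha>" "c (k \<beta>) = k \<beta>" using comm k(1) I y(5,6) by metis+
    moreover have "k \<alpha> < y" "y < k \<beta>"
      using strict_mono_onD[OF strict_mono_Icc[OF k(1)]] I y(2,3) k(2) by metis+
    ultimately show ?thesis using free y(2,3) by (meson le_less_linear order.strict_trans)
  qed
  obtain k where k: "k \<in> G" "\<And>x. x \<in> {a..b} \<Longrightarrow> k (h x) = x" "\<And>x. x \<in> {a..b} \<Longrightarrow> h (k x) = x"
    using inverse_in[OF h(1)] by blast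
  have "k y = y" using k(2) h(2) I(3) by metis
  then have "h (k \<alpha>) \<le> h \<alpha>" "h \<beta> \<le> h (k \<beta>)"
    using bounds[OF k(1)] mono_onD[OF mono_Icc[OF h(1)]] maps_Icc[OF k(1)] I by auto
  then show "h \<alpha> = \<alpha>" "h \<beta> = \<beta>" using bounds[OF h] k(3) I by force+
qed

lemma contraction_has_central_fixed_point:
  assumes c: "c \<in> G" "\<forall>h\<in>G. \<forall>x\<in>{a..b}. c (h x) = h (c x)"
    and W: "W \<in> G" "\<forall>x\<in>{P..Q}. W x \<in> {P..Q}"
    and W'_le: "\<And>W'. \<forall>x\<in>{a..b}. (W has_real_derivative W' x) (at x within {a..b})
      \<Longrightarrow> \<forall>x\<in>{P..Q}. W' x \<le> 1/2"
    and PQ: "a \<le> P" "P \<le> Q" "Q \<le> b"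
  shows "\<exists>z\<in>{P..Q}. c z = z"
proof -
  obtain W' where W': "\<forall>x\<in>{a..b}. (W has_real_derivative W' x) (at x within {a..b})"
    "continuous_on {a..b} W'" using log_hoelder_deriv[OF W(1)] by metis
  obtain c' where c': "\<forall>x\<in>{a..b}. (c has_real_derivative c' x) (at x within {a..b})"
    "\<forall>x\<in>{a..b}. c' x > 0" using log_hoelder_deriv[OF c(1)] by metis
  have "{P..Q} \<subseteq> {a..b}" using PQ by auto
  then have "continuous_on {P..Q} (\<lambda>x. W x - x)"
    by (intro continuous_intros continuous_on_subset[OF continuous_Icc[OF W(1)]])
  moreover have "W Q - Q \<le> 0" "0 \<le> W P - P" using W(2) PQ by auto
  ultimately obtain z where z: "P \<le> z" "z \<le> Q" "W z = z"
    using IVT2'[of "\<lambda>x. W x - x" Q 0 P] PQ by auto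
  have "c z = z"
  proof (rule ccontr)
    assume "c z \<noteq> z"
    have "\<forall>x\<in>{a..b}. c (W x) = W (c x)" using c(2) W(1) by blast
    moreover have "z \<in> {a..b}" using z PQ by auto
    ultimately have "1 \<le> W' z"
      using commuting_fixed_point_deriv_ge_1[OF ab _ W' _ c'] maps_Icc W(1) c(1) z(3) \<open>c z \<noteq> z\<close>
      by blast
    moreover have "W' z \<le> 1/2" using W'_le[OF W'(1)] z by simp
    ultimately show False by simp
  qed
  then show ?thesis using z by auto
qed

lemma contraction_fixes_central_between:
  assumes c: "c \<in> G" "\<forall>h\<in>G. \<forall>x\<in>{a..b}. c (h x) = h (c x)"
    and W: "W \<in> G" "\<forall>x\<in>{P..Q}. W x \<in> {P..Q}"
    and W'_le: "\<And>W'. \<forall>x\<in>{a..b}. (W has_real_derivative W' x) (at x within {a..b})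
      \<Longrightarrow> \<forall>x\<in>{P..Q}. W' x \<le> 1/2"
    and PQ: "a \<le> P" "Q \<le> b"
    and y: "P \<le> \<alpha>" "\<alpha> < y" "y < \<beta>" "\<beta> \<le> Q" "c \<alpha> = \<alpha>" "c \<beta> = \<beta>"
  shows "c y = y"
proof -
  obtain W' L where W': "\<forall>x\<in>{a..b}. (W has_real_derivative W' x) (at x within {a..b})"
    "\<forall>x\<in>{a..b}. W' x > 0" "continuous_on {a..b} W'" and W'_hoelder: "\<And>L'. L \<le> L' \<Longrightarrow>
      \<forall>x\<in>{a..b}. \<forall>y\<in>{a..b}. W' x \<le> W' y * exp (L' * \<bar>x - y\<bar> powr (min \<tau> 1))"
    using log_hoelder_deriv[OF W(1)] by metis
  obtain c' Lc where c': "\<forall>x\<in>{a..b}. (c has_real_derivative c' x) (at x within {a..b})"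
    "\<forall>x\<in>{a..b}. c' x > 0" "continuous_on {a..b} c'" and "\<And>L'. Lc \<le> L' \<Longrightarrow>
      \<forall>x\<in>{a..b}. \<forall>y\<in>{a..b}. c' x \<le> c' y * exp (L' * \<bar>x - y\<bar> powr (min \<tau> 1))"
    using log_hoelder_deriv[OF c(1)] by metis
  show ?thesis
  proof (rule commuting_contraction_fixes_between[where \<alpha> = \<alpha> and \<beta> = \<beta>,
        OF _ W'(1,2) W'_hoelder[OF max.cobounded1[of L 0]] _ _ _ W(2) W'_le[OF W'(1)] _ _ _ c'])
    show "\<forall>x\<in>{a..b}. W x \<in> {a..b}" "\<forall>x\<in>{a..b}. c x \<in> {a..b}"
      using maps_Icc W(1) c(1) by blast+
    show "\<forall>x\<in>{a..b}. c (W x) = W (c x)" using c(2) W(1) by blast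
  qed (use tau PQ y in auto)
qed

lemma central_not_crossed:
  assumes c: "in_center {a..b} G c" and f: "f \<in> G" and g: "g \<in> G"
  shows "\<not> crossed {a..b} (supp {a..b} c) f g"
proof
  assume "crossed {a..b} (supp {a..b} c) f g"
  then obtain u w v N where uwv: "u \<in> {a..b}" "w \<in> {a..b}" "v \<in> {a..b}" "u < w" "w < v" "c w \<noteq> w"
    and orbits: "\<forall>n. ipow {a..b} g n u < w" "\<forall>n. w < ipow {a..b} f n v"
    and N: "ipow {a..b} g N v < w" "w < ipow {a..b} f N u"
    unfolding crossed_def supp_def by blast
  obtain P where P: "u \<le> P" "P < w" "g P = P" "\<And>x. P < x \<Longrightarrow> x \<le> v \<Longrightarrow> g x \<noteq> x"
    using fixed_point_left_of_crossing[OF g uwv(1,3,4,5) orbits(1) N(1)] by blast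
  obtain Q where Q: "w < Q" "Q \<le> v" "f Q = Q" "\<And>x. u \<le> x \<Longrightarrow> x < Q \<Longrightarrow> f x \<noteq> x"
    using fixed_point_right_of_crossing[OF f uwv(1,3,4,5) orbits(2) N(2)] by blast
  have PQ: "a \<le> P" "P < Q" "Q \<le> b" using P Q uwv by auto
  have "g x \<noteq> x" if "P < x" "x \<le> Q" for x using P(4) Q(2) that by simp
  moreover have "f x \<noteq> x" if "P \<le> x" "x < Q" for x using Q(4) P(1) that by simp
  ultimately obtain W where W: "W \<in> G" "\<forall>x\<in>{P..Q}. W x \<in> {P..Q}"
    and W'_le: "\<And>W'. \<forall>x\<in>{a..b}. (W has_real_derivative W' x) (at x within {a..b})
      \<Longrightarrow> \<forall>x\<in>{P..Q}. W' x \<le> 1/2"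
    using contraction_between_fixed_points[OF f g PQ P(3) _ Q(3)] by blast
  have cG: "c \<in> G" and comm: "\<forall>h\<in>G. \<forall>x\<in>{a..b}. c (h x) = h (c x)"
    using c by (auto simp: in_center_def)
  obtain \<alpha> \<beta> where \<alpha>\<beta>: "a \<le> \<alpha>" "\<alpha> < w" "w < \<beta>" "\<beta> \<le> b" "c \<alpha> = \<alpha>" "c \<beta> = \<beta>"
    and free: "\<And>x. \<alpha> < x \<Longrightarrow> x < \<beta> \<Longrightarrow> c x \<noteq> x"
    using fixed_point_free_component[OF continuous_Icc[OF cG] fixes_endpoints[OF cG] uwv(2,6)]
      by blast
  show False
  proof (cases "\<alpha> < P")
    case True
    have "Q < \<beta>"
    proof (rule ccontr)
      assume "\<not> Q < \<beta>"
      have "g \<beta> = \<beta>"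
        using commuting_fixes_component_ends(2)[OF comm \<alpha>\<beta>(1) True _ \<alpha>\<beta>(4-6) free g P(3)] P(2) \<alpha>\<beta>(3)
        by linarith
      then show False using P(4)[of \<beta>] \<open>\<not> Q < \<beta>\<close> Q(2) P(2) \<alpha>\<beta>(3) by linarith
    qed
    then have "\<forall>z\<in>{P..Q}. c z \<noteq> z" using free True by auto
    then show False using contraction_has_central_fixed_point[OF cG comm W W'_le] PQ by auto
  next
    case False
    have "\<beta> \<le> Q"
    proof (rule ccontr)
      assume "\<not> \<beta> \<le> Q"
      have "f \<alpha> = \<alpha>"
        using commuting_fixes_component_ends(1)[OF comm \<alpha>\<beta>(1) _ _ \<alpha>\<beta>(4-6) free f Q(3)] \<alpha>\<beta>(2) Q(1)
          \<open>\<not> \<beta> \<le> Q\<close> by linarith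
      then show False using Q(4)[of \<alpha>] False P(1) Q(1) \<alpha>\<beta>(2) by linarith
    qed
    then show False
      using contraction_fixes_central_between[OF cG comm W W'_le, of \<alpha> w \<beta>] PQ False \<alpha>\<beta> uwv(6)
      by linarith
  qed
qed

end

theorem lemma3p10:
  fixes a b \<tau> :: real and G :: "(real \<Rightarrow> real) set" and c :: "real \<Rightarrow> real"
  assumes "a < b" and "\<tau> > 0"
    and "diff_subgroup {a..b} \<tau> G"
    and "in_center {a..b} G c"
  shows "conradian_on {a..b} G (supp {a..b} c)"
proof -
  interpret Icc_diff_group a b \<tau> G using assms(1-3) by unfold_locales
  show ?thesis unfolding conradian_on_def using central_not_crossed[OF assms(4)] by blast
qed

end
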